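(* Under the standing model and assumptions below, and assuming $E(\Vert\varepsilon\Vert^2)<\infty$, for every parameter $W\in\Theta_s$, \[ U_n(W)-U_n(W^0)\xrightarrow{\text{a.s.}} K(W,W^0):=\ln\det\Gamma(W)-\ln\det\Gamma(W^0)\quad (n\to\infty), \] and $K(W,W^0)\ge 0$, with $K(W,W^0)=0$ if and only if $W=W^0$ (equality understood in the quotient parameter space, i.e. up to the finite group of weight transformations leaving the MLP function invariant).
   Context: Let $(Y_t,Z_t)_{t\in\mathbb N}$ be i.i.d. random vectors in $\mathbb R^d\times\mathbb R^{d'}$, each with the law of a generic pair $(Y,Z)$. The model is $Y_t=F_{W^0}(Z_t)+\varepsilon_t$, where for a weight vector $W$, $F_W:\mathbb R^{d'}\to\mathbb R^d$ is the function computed by a one-hidden-layer multilayer perceptron with weights $W$ and sigmoidal activation functions in the hidden units, and $W^0$ is the true weight vector. The noise $(\varepsilon_t)$ is i.i.d., centered, independent of the inputs $(Z_t)$, with invertible covariance matrix; $\varepsilon$ denotes a generic variable with the law of $\varepsilon_t$. The parameter set $\Theta_s\subset\mathbb R^s$ is compact, and contains $W^0$. Parameters are considered modulo the finite group of weight transformations leaving $F_W$ invariant, and the model is assumed identifiable in this quotient space: $F_W=F_{W^0}$ almost surely on the support of $Z$ implies $W=W^0$ (e.g. the number of hidden units is the true one). Define \[ \Gamma_n(W)=\frac1n\sum_{t=1}^n (Y_t-F_W(Z_t))(Y_t-F_W(Z_t))^T,\qquad U_n(W)=\ln\det\Gamma_n(W), \] and $\Gamma(W)=E\big[(Y-F_W(Z))(Y-F_W(Z))^T\big]$,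 so $\Gamma(W^0)$ is the (invertible) noise covariance. *)

theory Defs
  imports "HOL-Probability.Probability"
begin

definition sigmoidal :: "(real \<Rightarrow> real) \<Rightarrow> bool" where
  "sigmoidal \<sigma> \<longleftrightarrow> continuous_on UNIV \<sigma> \<and> mono \<sigma> \<and>
     (\<exists>a b. a < b \<and> (\<sigma> \<longlongrightarrow> a) at_bot \<and> (\<sigma> \<longlongrightarrow> b) at_top)"

definition outer :: "real^'n \<Rightarrow> real^'n \<Rightarrow> real^'n^'n" where
  "outer v w = (\<chi> i j. v $ i * w $ j)"

definition mlp :: "(real \<Rightarrow> real) \<Rightarrow> ((real^'p^'h) \<times> (real^'h) \<times> (real^'h^'d) \<times> (real^'d))
    \<Rightarrow> real^'p \<Rightarrow> real^'d" where
  "mlp \<sigma> W z = (case W of (A, c, B, b) \<Rightarrow> B *v (\<chi> h. \<sigma> ((A $ h) \<bullet> z + c $ h)) + b)"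

definition emp_cov :: "(real^'p \<Rightarrow> real^'d) \<Rightarrow> (nat \<Rightarrow> 'a \<Rightarrow> real^'d) \<Rightarrow> (nat \<Rightarrow> 'a \<Rightarrow> real^'p)
    \<Rightarrow> nat \<Rightarrow> 'a \<Rightarrow> real^'d^'d" where
  "emp_cov f Y Z n x = (1 / real n) *\<^sub>R (\<Sum>t\<in>{1..n}. outer (Y t x - f (Z t x)) (Y t x - f (Z t x)))"

definition U_n :: "(real^'p \<Rightarrow> real^'d) \<Rightarrow> (nat \<Rightarrow> 'a \<Rightarrow> real^'d) \<Rightarrow> (nat \<Rightarrow> 'a \<Rightarrow> real^'p)
    \<Rightarrow> nat \<Rightarrow> 'a \<Rightarrow> real" where
  "U_n f Y Z n x = ln (det (emp_cov f Y Z n x))"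

definition pop_cov :: "'a measure \<Rightarrow> (real^'p \<Rightarrow> real^'d) \<Rightarrow> ('a \<Rightarrow> real^'d) \<Rightarrow> ('a \<Rightarrow> real^'p)
    \<Rightarrow> real^'d^'d" where
  "pop_cov M f Y Z = (\<chi> i j. integral\<^sup>L M (\<lambda>x. (Y x - f (Z x)) $ i * (Y x - f (Z x)) $ j))"

definition K_contrast :: "'a measure \<Rightarrow> (real^'p \<Rightarrow> real^'d) \<Rightarrow> (real^'p \<Rightarrow> real^'d)
    \<Rightarrow> ('a \<Rightarrow> real^'d) \<Rightarrow> ('a \<Rightarrow> real^'p) \<Rightarrow> real" where
  "K_contrast M f f0 Y Z = ln (det (pop_cov M f Y Z)) - ln (det (pop_cov M f0 Y Z))"

end

theory Submission
  imports Defs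
begin

(* For a regression function f, the empirical covariance Gamma_n(f) of the residuals
   Y_t - f(Z_t) has entries that are averages of i.i.d. integrable variables, so by the
   strong law of large numbers it converges almost surely to the population covariance
   Gamma(f); continuity of det and ln then gives U_n(f) -> ln det Gamma(f).  Independence of
   the centred noise from the input splits Gamma(f) = Sigma + D(f), with Sigma the (positive
   definite) noise covariance and D(f) the psd second moment of f0(Z) - f(Z).  Since
   det (A + D) >= det A for A pd and D psd, with equality only for D = 0, the contrast
   K(f, f0) = ln det Gamma(f) - ln det Sigma is nonnegative and vanishes exactly when
   f = f0 almost surely on Z.  For MLPs, outputs are bounded and continuous, and
   identifiability modulo the invariance group converts the last condition into W = g W0. *)

section \<open>Averages of real sequences\<close>

lemma cesaro_lim:
  fixes a :: "nat \<Rightarrow> real"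
  assumes "a \<longlonglongrightarrow> L"
  shows "(\<lambda>n. (\<Sum>k\<in>{1..n}. a k) / real n) \<longlonglongrightarrow> L"
proof (rule LIMSEQ_I)
  fix e :: real assume e: "0 < e"
  define b where "b k = a k - L" for k
  have "b \<longlonglongrightarrow> 0" unfolding b_def using tendsto_diff[OF assms tendsto_const[of L]] by simp
  then obtain N where N: "\<And>k. k \<ge> N \<Longrightarrow> \<bar>b k\<bar> < e/2"
    using e by (metis LIMSEQ_D diff_zero half_gt_zero real_norm_def)
  define B where "B = (\<Sum>k\<in>{1..N}. \<bar>b k\<bar>)"
  obtain N2 :: nat where N2: "real N2 > 2*B/e" using reals_Archimedean2 by blast
  show "\<exists>no. \<forall>n\<ge>no. norm ((\<Sum>k\<in>{1..n}. a k) / real n - L) < e"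
  proof (intro exI allI impI)
    fix n assume n: "n \<ge> max (max N N2) 1"
    then have npos: "real n > 0" by auto
    have eq: "(\<Sum>k\<in>{1..n}. a k) / real n - L = (\<Sum>k\<in>{1..n}. b k) / real n"
      using npos by (simp add: b_def sum_subtractf field_simps)
    have split: "{1..n} = {1..N} \<union> {N<..n}" using n by auto
    have "\<bar>\<Sum>k\<in>{1..n}. b k\<bar> \<le> (\<Sum>k\<in>{1..n}. \<bar>b k\<bar>)" by (rule sum_abs)
    also have "\<dots> = B + (\<Sum>k\<in>{N<..n}. \<bar>b k\<bar>)"
      unfolding B_def split by (subst sum.union_disjoint) auto
    also have "(\<Sum>k\<in>{N<..n}. \<bar>b k\<bar>) \<le> (\<Sum>k\<in>{N<..n}. e/2)"
      by (intro sum_mono less_imp_le N) auto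
    also have "\<dots> \<le> real n * (e/2)" using e n by auto
    finally have le: "\<bar>\<Sum>k\<in>{1..n}. b k\<bar> \<le> B + real n * (e/2)" by simp
    have "2*B/e < real n" using N2 n by auto
    then have "B < real n * (e/2)" using e by (simp add: field_simps)
    with le have "\<bar>\<Sum>k\<in>{1..n}. b k\<bar> < real n * e" by linarith
    then show "norm ((\<Sum>k\<in>{1..n}. a k) / real n - L) < e"
      unfolding eq using npos by (simp add: abs_div pos_divide_less_eq mult.commute)
  qed
qed

lemma bracketing_index:
  fixes k :: "nat \<Rightarrow> nat"
  assumes kinf: "filterlim k at_top sequentially" and n: "k J \<le> n"
  obtains j where "J \<le> j" "k j \<le> n" "n < k (Suc j)"
proof -
  have "eventually (\<lambda>j. Suc n \<le> k j) sequentially" using kinf unfolding filterlim_at_top by auto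
  then obtain N where N: "\<And>j. j \<ge> N \<Longrightarrow> n < k j"
    unfolding eventually_sequentially by (meson Suc_le_eq)
  define S where "S = {j. k j \<le> n}"
  have finS: "finite S"
    by (rule finite_subset[of _ "{..<N}"]) (use N in \<open>force simp: S_def not_less[symmetric]\<close>)+
  have JS: "J \<in> S" using n unfolding S_def by auto
  define j where "j = Max S"
  have "j \<in> S" unfolding j_def using finS JS by (intro Max_in) auto
  moreover have "J \<le> j" unfolding j_def using finS JS by auto
  moreover have "Suc j \<notin> S" using finS j_def by (metis Max_ge Suc_n_not_le_n)
  ultimately show ?thesis by (intro that) (auto simp: S_def)
qed

lemma interpolate_monotone_averages:
  fixes T :: "nat \<Rightarrow> real" and k :: "nat \<Rightarrow> nat"
  assumes monoT: "\<And>m n. m \<le> n \<Longrightarrow> T m \<le> T n" and T0: "\<And>n. T n \<ge> 0"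
    and k1: "\<And>j. k j \<ge> 1" and kinf: "filterlim k at_top sequentially"
    and lim1: "(\<lambda>j. T (k j) / real (k j)) \<longlonglongrightarrow> \<mu>"
    and lim2: "(\<lambda>j. real (k (Suc j)) / real (k j)) \<longlonglongrightarrow> \<alpha>"
    and a: "\<alpha> > 0" and \<delta>: "\<delta> > 0"
  shows "eventually (\<lambda>n. \<mu>/\<alpha> - \<delta> < T n / real n \<and> T n / real n < \<alpha>*\<mu> + \<delta>) sequentially"
proof -
  have "(\<lambda>j. T (k (Suc j)) / real (k (Suc j)) * (real (k (Suc j)) / real (k j))) \<longlonglongrightarrow> \<mu> * \<alpha>"
    using tendsto_mult[OF lim1[THEN LIMSEQ_Suc] lim2] .
  moreover have "T (k (Suc j)) / real (k (Suc j)) * (real (k (Suc j)) / real (k j)) = T (k (Suc j)) / real (k j)" for j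
    using k1[of "Suc j"] by (simp add: field_simps)
  ultimately have upper: "(\<lambda>j. T (k (Suc j)) / real (k j)) \<longlonglongrightarrow> \<alpha> * \<mu>" by (simp add: mult.commute)
  have "(\<lambda>j. (T (k j) / real (k j)) / (real (k (Suc j)) / real (k j))) \<longlonglongrightarrow> \<mu> / \<alpha>"
    using tendsto_divide[OF lim1 lim2] a by simp
  moreover have "(\<lambda>j. (T (k j) / real (k j)) / (real (k (Suc j)) / real (k j))) = (\<lambda>j. T (k j) / real (k (Suc j)))"
  proof (rule ext)
    fix j show "(T (k j) / real (k j)) / (real (k (Suc j)) / real (k j)) = T (k j) / real (k (Suc j))"
      using k1[of j] k1[of "Suc j"] by (simp add: field_simps)
  qed
  ultimately have lower: "(\<lambda>j. T (k j) / real (k (Suc j))) \<longlonglongrightarrow> \<mu> / \<alpha>" by simp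
  have "eventually (\<lambda>j. T (k (Suc j)) / real (k j) < \<alpha> * \<mu> + \<delta>) sequentially"
    using order_tendstoD(2)[OF upper] \<delta> by simp
  moreover have "eventually (\<lambda>j. \<mu>/\<alpha> - \<delta> < T (k j) / real (k (Suc j))) sequentially"
    using order_tendstoD(1)[OF lower] \<delta> by simp
  ultimately obtain J where J: "\<And>j. j \<ge> J \<Longrightarrow> T (k (Suc j)) / real (k j) < \<alpha> * \<mu> + \<delta> \<and> \<mu>/\<alpha> - \<delta> < T (k j) / real (k (Suc j))"
    unfolding eventually_sequentially by (metis (no_types, lifting) eventually_conj eventually_sequentially)
  show ?thesis unfolding eventually_sequentially
  proof (intro exI allI impI)
    fix n assume "n \<ge> k J"
    then obtain j where Jj: "J \<le> j" and kj: "k j \<le> n" and nk: "n < k (Suc j)"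
      using bracketing_index[OF kinf] by blast
    have kjp: "real (k j) > 0" using k1[of j] by auto
    have np: "real n > 0" using kj k1[of j] by auto
    have "T n / real n \<le> T (k (Suc j)) / real (k j)"
      using monoT[of n "k (Suc j)"] nk kj T0[of "k (Suc j)"] kjp np by (intro frac_le) auto
    moreover have "T (k j) / real (k (Suc j)) \<le> T n / real n"
      using monoT[of "k j" n] nk kj T0[of "k j"] kjp np by (intro frac_le) auto
    ultimately show "\<mu>/\<alpha> - \<delta> < T n / real n \<and> T n / real n < \<alpha>*\<mu> + \<delta>"
      using J[OF Jj] by linarith
  qed
qed

text \<open>The integer geometric sequence \<open>\<lfloor>\<alpha>\<^sup>j\<rfloor>\<close> along which the strong law is first proved.\<close>
definition geom_seq :: "real \<Rightarrow> nat \<Rightarrow> nat" where "geom_seq \<alpha> j = nat \<lfloor>\<alpha>^j\<rfloor>"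

lemma geom_seq_bounds:
  assumes a: "\<alpha> > 1"
  shows "geom_seq \<alpha> j \<ge> 1" "real (geom_seq \<alpha> j) \<le> \<alpha>^j" "\<alpha>^j - 1 \<le> real (geom_seq \<alpha> j)"
    "\<alpha>^j \<le> 2 * real (geom_seq \<alpha> j)"
proof -
  have ge: "\<alpha>^j \<ge> 1" using a by auto
  then have f1: "\<lfloor>\<alpha>^j\<rfloor> \<ge> 1" by linarith
  then show "geom_seq \<alpha> j \<ge> 1" unfolding geom_seq_def by linarith
  show "real (geom_seq \<alpha> j) \<le> \<alpha>^j" unfolding geom_seq_def using f1 by linarith
  show "\<alpha>^j - 1 \<le> real (geom_seq \<alpha> j)" unfolding geom_seq_def using f1 by linarith
  then show "\<alpha>^j \<le> 2 * real (geom_seq \<alpha> j)" using f1 unfolding geom_seq_def by linarith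
qed

lemma geom_seq_ratio:
  assumes a: "\<alpha> > 1"
  shows "(\<lambda>j. real (geom_seq \<alpha> j) / \<alpha>^j) \<longlonglongrightarrow> 1"
proof (rule real_tendsto_sandwich)
  have "(\<lambda>j. 1 - (1/\<alpha>)^j) \<longlonglongrightarrow> 1 - 0"
    using a by (intro tendsto_diff tendsto_const LIMSEQ_power_zero) auto
  then show "(\<lambda>j. 1 - (1/\<alpha>)^j) \<longlonglongrightarrow> 1" by simp
  show "\<forall>\<^sub>F j in sequentially. 1 - (1/\<alpha>)^j \<le> real (geom_seq \<alpha> j) / \<alpha>^j"
  proof (intro always_eventually allI)
    fix j
    have p: "\<alpha>^j > 0" using a by auto
    have "1 - (1/\<alpha>)^j = (\<alpha>^j - 1)/\<alpha>^j" using p a by (simp add: power_divide diff_divide_distrib)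
    also have "\<dots> \<le> real (geom_seq \<alpha> j) / \<alpha>^j"
      using p geom_seq_bounds(3)[OF a] by (intro divide_right_mono) auto
    finally show "1 - (1/\<alpha>)^j \<le> real (geom_seq \<alpha> j) / \<alpha>^j" .
  qed
  show "\<forall>\<^sub>F j in sequentially. real (geom_seq \<alpha> j) / \<alpha>^j \<le> 1"
    using geom_seq_bounds(2)[OF a] a by (intro always_eventually allI) (simp add: divide_le_eq_1)
qed (rule tendsto_const)

lemma geom_seq_lim:
  assumes a: "\<alpha> > 1"
  shows "filterlim (geom_seq \<alpha>) at_top sequentially"
    "(\<lambda>j. real (geom_seq \<alpha> (Suc j)) / real (geom_seq \<alpha> j)) \<longlonglongrightarrow> \<alpha>"
proof -
  have "filterlim (\<lambda>j. \<alpha>^j) at_top sequentially"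
    using a by (intro filterlim_at_infinity_imp_filterlim_at_top filterlim_realpow_sequentially_gt1) auto
  then have ev: "eventually (\<lambda>j. c \<le> \<alpha>^j) sequentially" for c unfolding filterlim_at_top by auto
  show "filterlim (geom_seq \<alpha>) at_top sequentially" unfolding filterlim_at_top
  proof
    fix c :: nat
    show "eventually (\<lambda>j. c \<le> geom_seq \<alpha> j) sequentially"
    proof (rule eventually_mono[OF ev[of "2 * real c"]])
      fix j assume "2 * real c \<le> \<alpha>^j"
      then have "real c \<le> real (geom_seq \<alpha> j)" using geom_seq_bounds(4)[OF a, of j] by linarith
      then show "c \<le> geom_seq \<alpha> j" by simp
    qed
  qed
  have r: "(\<lambda>j. real (geom_seq \<alpha> (Suc j)) / \<alpha>^(Suc j) * \<alpha> / (real (geom_seq \<alpha> j) / \<alpha>^j)) \<longlonglongrightarrow> 1 * \<alpha> / 1"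
    by (intro tendsto_divide tendsto_mult geom_seq_ratio[OF a, THEN LIMSEQ_Suc] geom_seq_ratio[OF a] tendsto_const) auto
  have "(\<lambda>j. real (geom_seq \<alpha> (Suc j)) / \<alpha>^(Suc j) * \<alpha> / (real (geom_seq \<alpha> j) / \<alpha>^j))
      = (\<lambda>j. real (geom_seq \<alpha> (Suc j)) / real (geom_seq \<alpha> j))"
  proof
    fix j show "real (geom_seq \<alpha> (Suc j)) / \<alpha>^(Suc j) * \<alpha> / (real (geom_seq \<alpha> j) / \<alpha>^j)
      = real (geom_seq \<alpha> (Suc j)) / real (geom_seq \<alpha> j)"
      using geom_seq_bounds(1)[OF a, of j] a by (simp add: field_simps)
  qed
  with r show "(\<lambda>j. real (geom_seq \<alpha> (Suc j)) / real (geom_seq \<alpha> j)) \<longlonglongrightarrow> \<alpha>" by simp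
qed

text \<open>Tail bound behind Etemadi's argument: \<open>\<Sum>\<^sub>j r\<^sup>2/\<alpha>\<^sup>j\<close> over the \<open>j\<close> with \<open>\<alpha>\<^sup>j \<ge> r\<close> is at
  most \<open>r\<alpha>/(\<alpha>-1)\<close>, proved by telescoping \<open>min (1/r) (1/\<alpha>\<^sup>j)\<close>.\<close>
lemma geometric_tail_bound:
  fixes \<alpha> r :: real
  assumes a: "\<alpha> > 1" and r: "r \<ge> 0"
  shows "(\<Sum>j<N. if r \<le> \<alpha>^j then r^2/\<alpha>^j else 0) \<le> r * \<alpha> / (\<alpha> - 1)"
proof (cases "r = 0")
  case True
  then have "\<And>j. (if r \<le> \<alpha>^j then r^2/\<alpha>^j else 0) = (0::real)" by simp
  then show ?thesis using True by simp
next
  case False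
  then have rp: "r > 0" using r by auto
  define g where "g j = min (1/r) (1/\<alpha>^j)" for j :: nat
  have step: "(if r \<le> \<alpha>^j then r^2/\<alpha>^j else 0) \<le> r^2 * \<alpha>/(\<alpha>-1) * (g j - g (Suc j))" for j
  proof (cases "r \<le> \<alpha>^j")
    case True
    have p: "\<alpha>^j > 0" using a by auto
    have g1: "g j = 1/\<alpha>^j" unfolding g_def using True rp p by (simp add: min_def field_simps)
    have "\<alpha>^j \<le> \<alpha>^Suc j" using a by auto
    then have "r \<le> \<alpha>^Suc j" using True by linarith
    then have g2: "g (Suc j) = 1/\<alpha>^Suc j" unfolding g_def using rp a by (simp add: min_def field_simps)
    have "r^2 * \<alpha>/(\<alpha>-1) * (g j - g (Suc j)) = r^2/\<alpha>^j" unfolding g1 g2 using a p by (simp add: field_simps)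
    then show ?thesis using True by simp
  next
    case False
    have "1/\<alpha>^Suc j \<le> 1/\<alpha>^j" using a by (simp add: divide_simps)
    then have "g (Suc j) \<le> g j" unfolding g_def by (simp add: min_def)
    then show ?thesis using False a by (simp add: mult_nonneg_nonneg)
  qed
  have "(\<Sum>j<N. if r \<le> \<alpha>^j then r^2/\<alpha>^j else 0) \<le> (\<Sum>j<N. r^2 * \<alpha>/(\<alpha>-1) * (g j - g (Suc j)))"
    by (intro sum_mono step)
  also have "\<dots> = r^2 * \<alpha>/(\<alpha>-1) * (g 0 - g N)"
    by (subst sum_distrib_left[symmetric]) (simp add: sum_lessThan_telescope')
  also have "\<dots> \<le> r^2 * \<alpha>/(\<alpha>-1) * (1/r)"
  proof -
    have "g N \<ge> 0" "g 0 \<le> 1/r" unfolding g_def using rp a by auto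
    then show ?thesis using a by (intro mult_left_mono) auto
  qed
  also have "\<dots> = r * \<alpha> / (\<alpha> - 1)" using rp by (simp add: power2_eq_square)
  finally show ?thesis .
qed

section \<open>Etemadi's strong law of large numbers\<close>

text \<open>Counting the integers below \<open>r\<close>: used to bound \<open>\<Sum>\<^sub>k P(X > k)\<close> by \<open>E X + 1\<close>.\<close>
lemma count_below_le:
  fixes r :: real assumes "r \<ge> 0"
  shows "(\<Sum>k<N. if real k < r then 1 else 0) \<le> r + 1"
proof -
  have "(\<Sum>k<N. if real k < r then 1 else (0::real)) = real (card {k\<in>{..<N}. real k < r})"
    by (simp add: sum.If_cases Int_def conj_commute)
  also have "card {k\<in>{..<N}. real k < r} \<le> card {..<nat \<lceil>r\<rceil>}"
    by (intro card_mono) (auto, linarith)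
  then have "real (card {k\<in>{..<N}. real k < r}) \<le> real (nat \<lceil>r\<rceil>)" by simp
  finally show ?thesis using assms by linarith
qed

lemma tendsto_zero_from_inverse_bounds:
  fixes f :: "nat \<Rightarrow> real"
  assumes "\<And>i::nat. eventually (\<lambda>j. \<bar>f j\<bar> < 1 / real (Suc i)) sequentially"
  shows "f \<longlonglongrightarrow> 0"
proof (rule LIMSEQ_I)
  fix r :: real assume "r > 0"
  then obtain i :: nat where "inverse (real (Suc i)) < r" using reals_Archimedean by blast
  then have "1 / real (Suc i) < r" by (simp add: inverse_eq_divide)
  with assms[of i] have "eventually (\<lambda>j. norm (f j - 0) < r) sequentially"
    by (auto elim: eventually_mono)
  then show "\<exists>no. \<forall>n\<ge>no. norm (f n - 0) < r" unfolding eventually_sequentially .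
qed

lemma tendsto_from_ratio_bounds:
  fixes s :: "nat \<Rightarrow> real"
  assumes \<mu>0: "\<mu> \<ge> 0"
    and bounds: "\<And>i \<delta>. \<delta> > 0 \<Longrightarrow> eventually (\<lambda>n. \<mu> / (1 + 1 / real (Suc i)) - \<delta> < s n
                                   \<and> s n < (1 + 1 / real (Suc i)) * \<mu> + \<delta>) sequentially"
  shows "s \<longlonglongrightarrow> \<mu>"
proof (rule LIMSEQ_I)
  fix e :: real assume e: "e > 0"
  obtain i :: nat where i: "real i > 2 * \<mu> / e" using reals_Archimedean2 by blast
  define \<alpha> where "\<alpha> = 1 + 1 / real (Suc i)"
  have small: "\<mu> / real (Suc i) < e/2"
  proof -
    have "2 * \<mu> < e * real (Suc i)" using i e by (simp add: field_simps)
    then show ?thesis by (simp add: field_simps)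
  qed
  then have upper: "\<alpha> * \<mu> \<le> \<mu> + e/2" unfolding \<alpha>_def by (simp add: algebra_simps)
  have "\<mu> - \<mu> / \<alpha> = \<mu> / (real (Suc i) + 1)" unfolding \<alpha>_def by (simp add: field_simps)
  also have "\<dots> \<le> \<mu> / real (Suc i)" using \<mu>0 by (intro divide_left_mono) auto
  finally have lower: "\<mu> - e/2 \<le> \<mu> / \<alpha>" using small by linarith
  have "eventually (\<lambda>n. \<mu> / \<alpha> - e/2 < s n \<and> s n < \<alpha> * \<mu> + e/2) sequentially"
    using bounds[of "e/2" i] e unfolding \<alpha>_def by simp
  then have "eventually (\<lambda>n. norm (s n - \<mu>) < e) sequentially"
    by (rule eventually_mono) (use upper lower in \<open>auto simp: abs_less_iff\<close>)
  then show "\<exists>no. \<forall>n\<ge>no. norm (s n - \<mu>) < e" unfolding eventually_sequentially .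
qed

lemma (in prob_space) integral_same_distr:
  assumes "random_variable borel X" "random_variable borel X'"
    and "distr M borel X = distr M borel X'" and "f \<in> borel_measurable borel"
  shows "(\<integral>x. f (X x) \<partial>M) = (\<integral>x. (f (X' x) :: real) \<partial>M)"
  using integral_distr[OF assms(1,4)] integral_distr[OF assms(2,4)] assms(3) by simp

lemma (in prob_space) prob_same_distr:
  assumes "random_variable borel X" "random_variable borel X'"
    and "distr M borel X = distr M borel X'" and "A \<in> sets borel"
  shows "measure M {x\<in>space M. X x \<in> A} = measure M {x\<in>space M. X' x \<in> A}"
  using measure_distr[OF assms(1,4)] measure_distr[OF assms(2,4)] assms(3)
  by (simp add: vimage_def Int_def conj_commute)

lemma (in prob_space) distr_compose_same_distr:
  assumes "random_variable borel X" "random_variable borel X'"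
    and "distr M borel X = distr M borel X'" and "f \<in> borel_measurable borel"
  shows "distr M borel (\<lambda>x. f (X x)) = distr M borel (\<lambda>x. f (X' x))"
  using distr_distr[OF assms(4,1)] distr_distr[OF assms(4,2)] assms(3) by (simp add: comp_def)

text \<open>Variance of a sum of independent centred square-integrable variables: the cross terms
  vanish, so the second moment of the sum is the sum of the second moments.\<close>
lemma (in prob_space) second_moment_sum_indep:
  fixes C :: "nat \<Rightarrow> 'a \<Rightarrow> real"
  assumes ind: "indep_vars (\<lambda>_. borel) C UNIV"
    and int: "\<And>k. integrable M (C k)" and int2: "\<And>k. integrable M (\<lambda>x. (C k x)^2)"
    and centred: "\<And>k. expectation (C k) = 0" and fin: "finite I"
  shows "integrable M (\<lambda>x. (\<Sum>k\<in>I. C k x)^2)"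
    and "(\<integral>x. (\<Sum>k\<in>I. C k x)^2 \<partial>M) = (\<Sum>k\<in>I. \<integral>x. (C k x)^2 \<partial>M)"
proof -
  have pair: "indep_var borel (C k) borel (C l)" if "k \<noteq> l" for k l
  proof -
    have "indep_vars (\<lambda>_. borel) C {k, l}" using ind by (rule indep_vars_subset) auto
    from indep_vars_sum[OF _ _ this] that show ?thesis by simp
  qed
  have int_prod: "integrable M (\<lambda>x. C k x * C l x)" for k l
    using int2[of k] indep_var_integrable[OF pair int int, of k l]
    by (cases "k = l") (simp_all add: power2_eq_square)
  have cross: "(\<integral>x. C k x * C l x \<partial>M) = (if k = l then \<integral>x. (C k x)^2 \<partial>M else 0)" for k l
    using indep_var_lebesgue_integral[OF pair int int, of k l] centred
    by (simp add: power2_eq_square)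
  have sq: "(\<Sum>k\<in>I. C k x)^2 = (\<Sum>k\<in>I. \<Sum>l\<in>I. C k x * C l x)" for x
    by (simp add: power2_eq_square sum_product)
  show "integrable M (\<lambda>x. (\<Sum>k\<in>I. C k x)^2)" unfolding sq using int_prod by simp
  have "(\<integral>x. (\<Sum>k\<in>I. C k x)^2 \<partial>M) = (\<Sum>k\<in>I. \<Sum>l\<in>I. \<integral>x. C k x * C l x \<partial>M)"
    unfolding sq using int_prod by (simp add: Bochner_Integration.integral_sum)
  also have "\<dots> = (\<Sum>k\<in>I. \<integral>x. (C k x)^2 \<partial>M)"
    unfolding cross using fin by (simp add: sum.delta)
  finally show "(\<integral>x. (\<Sum>k\<in>I. C k x)^2 \<partial>M) = (\<Sum>k\<in>I. \<integral>x. (C k x)^2 \<partial>M)" .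
qed

definition trunc :: "nat \<Rightarrow> real \<Rightarrow> real" where
  "trunc k r = (if r \<le> real k then r else 0)"

lemma trunc_measurable [measurable]: "trunc k \<in> borel_measurable borel"
proof -
  have "trunc k = (\<lambda>r. if r \<le> real k then r else 0)" by (rule ext) (simp add: trunc_def)
  also have "\<dots> \<in> borel_measurable borel" by measurable
  finally show ?thesis .
qed

lemma trunc_bounds:
  assumes "r \<ge> 0"
  shows "0 \<le> trunc k r" "trunc k r \<le> r" "trunc k r \<le> real k"
  using assms unfolding trunc_def by auto

lemma trunc_mono_level: "k \<le> n \<Longrightarrow> r \<ge> 0 \<Longrightarrow> (trunc k r)^2 \<le> (trunc n r)^2"
  unfolding trunc_def by auto

text \<open>Pointwise form of the key summability estimate: along \<open>k\<^sub>j = \<lfloor>\<alpha>\<^sup>j\<rfloor>\<close>,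
  \<open>\<Sum>\<^sub>j trunc k\<^sub>j r\<^sup>2 / k\<^sub>j \<le> 2r\<alpha>/(\<alpha>-1)\<close>; integrated, it controls \<open>\<Sum>\<^sub>j Var(T k\<^sub>j)/k\<^sub>j\<^sup>2\<close>.\<close>
lemma trunc_geometric_sum:
  assumes a: "\<alpha> > 1" and r: "r \<ge> 0"
  shows "(\<Sum>j<N. (trunc (geom_seq \<alpha> j) r)^2 / real (geom_seq \<alpha> j)) \<le> 2 * (r * \<alpha> / (\<alpha> - 1))"
proof -
  have "(\<Sum>j<N. (trunc (geom_seq \<alpha> j) r)^2 / real (geom_seq \<alpha> j))
      \<le> (\<Sum>j<N. 2 * (if r \<le> \<alpha>^j then r^2/\<alpha>^j else 0))"
  proof (rule sum_mono)
    fix j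
    note k = geom_seq_bounds[OF a, of j]
    show "(trunc (geom_seq \<alpha> j) r)^2 / real (geom_seq \<alpha> j) \<le> 2 * (if r \<le> \<alpha>^j then r^2/\<alpha>^j else 0)"
    proof (cases "r \<le> real (geom_seq \<alpha> j)")
      case True
      have "r^2 / real (geom_seq \<alpha> j) \<le> r^2 / (\<alpha>^j / 2)"
        using k a by (intro divide_left_mono) auto
      then show ?thesis using True k(2) by (simp add: trunc_def mult.commute)
    next
      case False
      then show ?thesis using a by (simp add: trunc_def)
    qed
  qed
  also have "\<dots> = 2 * (\<Sum>j<N. if r \<le> \<alpha>^j then r^2/\<alpha>^j else 0)" by (simp add: sum_distrib_left)
  also have "\<dots> \<le> 2 * (r * \<alpha> / (\<alpha> - 1))"
    using geometric_tail_bound[OF a r, of N] by (intro mult_left_mono) auto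
  finally show ?thesis .
qed

locale iid_nonneg_seq = prob_space +
  fixes X :: "nat \<Rightarrow> 'a \<Rightarrow> real"
  assumes indep: "indep_vars (\<lambda>_. borel) X UNIV"
    and ident_distr: "\<And>t. distr M borel (X t) = distr M borel (X 0)"
    and integrable_X0: "integrable M (X 0)"
    and nonneg: "\<And>t x. 0 \<le> X t x"
begin

lemma X_measurable [measurable]: "X t \<in> borel_measurable M"
  using indep unfolding indep_vars_def by simp

lemma integral_ident:
  assumes "f \<in> borel_measurable borel"
  shows "(\<integral>x. f (X t x) \<partial>M) = (\<integral>x. (f (X 0 x) :: real) \<partial>M)"
  using integral_same_distr[OF X_measurable X_measurable ident_distr assms] .

definition trunc_sum :: "nat \<Rightarrow> 'a \<Rightarrow> real" where
  "trunc_sum n x = (\<Sum>t\<in>{1..n}. trunc t (X t x))"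

definition trunc_sum_mean :: "nat \<Rightarrow> real" where
  "trunc_sum_mean n = (\<Sum>t\<in>{1..n}. \<integral>x. trunc t (X 0 x) \<partial>M)"

lemma trunc_sum_measurable [measurable]: "trunc_sum n \<in> borel_measurable M"
  unfolding trunc_sum_def by measurable

lemma trunc_sum_mono: "m \<le> n \<Longrightarrow> trunc_sum m x \<le> trunc_sum n x"
  unfolding trunc_sum_def by (rule sum_mono2) (use trunc_bounds nonneg in auto)

lemma trunc_sum_nonneg: "0 \<le> trunc_sum n x"
  unfolding trunc_sum_def by (intro sum_nonneg) (use trunc_bounds nonneg in auto)

lemma integrable_trunc_sq: "integrable M (\<lambda>x. (trunc n (X t x))^2)"
  by (rule integrable_const_bound[where B="real n ^ 2"])
     (use trunc_bounds nonneg in \<open>auto intro!: AE_I2 power_mono\<close>)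

text \<open>\<open>\<Sum>\<^sub>k P(X\<^sub>k > k) \<le> E X\<^sub>0 + 1 < \<infinity>\<close>: the tail-sum formula, in integrated form.\<close>
lemma exceedance_summable: "summable (\<lambda>k. measure M {x\<in>space M. real k < X k x})"
proof (rule summableI_nonneg_bounded[OF measure_nonneg])
  have B_sets [measurable]: "{x\<in>space M. real k < X 0 x} \<in> sets M" for k by measurable
  have fin: "emeasure M B < \<infinity>" for B by (simp add: less_top[symmetric])
  have same: "measure M {x\<in>space M. real k < X k x} = measure M {x\<in>space M. real k < X 0 x}" for k
    using prob_same_distr[OF X_measurable X_measurable ident_distr, of "{real k<..}" k] by simp
  fix N
  have "(\<Sum>k<N. measure M {x\<in>space M. real k < X k x})
      = (\<integral>x. (\<Sum>k<N. indicator {x\<in>space M. real k < X 0 x} x) \<partial>M)"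
    unfolding same
    by (simp add: Int_absorb2 Bochner_Integration.integral_sum integrable_real_indicator[OF B_sets fin])
  also have "\<dots> \<le> (\<integral>x. X 0 x + 1 \<partial>M)"
  proof (rule integral_mono)
    show "integrable M (\<lambda>x. \<Sum>k<N. indicator {x \<in> space M. real k < X 0 x} x :: real)"
      by (intro Bochner_Integration.integrable_sum integrable_real_indicator[OF B_sets fin])
    show "integrable M (\<lambda>x. X 0 x + 1)" using integrable_X0 by simp
    fix x assume x: "x \<in> space M"
    have "(\<Sum>k<N. indicator {x \<in> space M. real k < X 0 x} x :: real) = (\<Sum>k<N. if real k < X 0 x then 1 else 0)"
      using x by (intro sum.cong) auto
    also have "\<dots> \<le> X 0 x + 1" by (rule count_below_le[OF nonneg])
    finally show "(\<Sum>k<N. indicator {x \<in> space M. real k < X 0 x} x :: real) \<le> X 0 x + 1" .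
  qed
  finally show "(\<Sum>k<N. measure M {x\<in>space M. real k < X k x}) \<le> expectation (X 0) + 1"
    using integrable_X0 by (simp add: prob_space)
qed

text \<open>Truncation changes only finitely many terms almost surely (Borel--Cantelli).\<close>
lemma truncation_negligible:
  "AE x in M. (\<lambda>n. ((\<Sum>t\<in>{1..n}. X t x) - trunc_sum n x) / real n) \<longlonglongrightarrow> 0"
proof -
  define A where "A k = {x\<in>space M. real k < X k x}" for k
  have A_sets [measurable]: "A k \<in> sets M" for k unfolding A_def by measurable
  have "AE x in M. eventually (\<lambda>k. x \<in> space M - A k) sequentially"
    using exceedance_summable unfolding A_def[symmetric]
    by (intro borel_cantelli_AE1 A_sets) (simp_all add: less_top[symmetric])
  then show ?thesis
  proof (rule AE_mp[OF _ AE_I2], intro impI)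
    fix x assume x: "x \<in> space M" and ev: "eventually (\<lambda>k. x \<in> space M - A k) sequentially"
    then obtain N where N: "\<And>k. k \<ge> N \<Longrightarrow> x \<notin> A k" unfolding eventually_sequentially by auto
    have same: "k \<ge> N \<Longrightarrow> X k x - trunc k (X k x) = 0" for k
      using N[of k] x unfolding A_def trunc_def by auto
    define c where "c = (\<Sum>t\<in>{1..N}. X t x - trunc t (X t x))"
    have "(\<Sum>t\<in>{1..n}. X t x) - trunc_sum n x = c" if n: "n \<ge> N" for n
    proof -
      have sp: "{1..n} = {1..N} \<union> {N<..n}" using n by auto
      have "(\<Sum>t\<in>{1..n}. X t x) - trunc_sum n x = (\<Sum>t\<in>{1..n}. X t x - trunc t (X t x))"
        unfolding trunc_sum_def by (simp add: sum_subtractf)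
      also have "\<dots> = c + (\<Sum>t\<in>{N<..n}. X t x - trunc t (X t x))" unfolding sp c_def
        by (subst sum.union_disjoint) auto
      finally show ?thesis using same by simp
    qed
    then have "eventually (\<lambda>n. c / real n = ((\<Sum>t\<in>{1..n}. X t x) - trunc_sum n x) / real n) sequentially"
      unfolding eventually_sequentially by auto
    then show "(\<lambda>n. ((\<Sum>t\<in>{1..n}. X t x) - trunc_sum n x) / real n) \<longlonglongrightarrow> 0"
      by (rule Lim_transform_eventually[OF lim_const_over_n])
  qed
qed

text \<open>The means of the truncated variables tend to \<open>E X\<^sub>0\<close> (dominated convergence), hence so
  do their Cesaro averages.\<close>
lemma trunc_sum_mean_average: "(\<lambda>n. trunc_sum_mean n / real n) \<longlonglongrightarrow> expectation (X 0)"
  unfolding trunc_sum_mean_def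
proof (rule cesaro_lim, rule integral_dominated_convergence[where w="X 0"])
  show "AE x in M. (\<lambda>k. trunc k (X 0 x)) \<longlonglongrightarrow> X 0 x"
  proof (rule AE_I2)
    fix x
    obtain K :: nat where K: "X 0 x \<le> real K" using real_arch_simple by blast
    have "eventually (\<lambda>k. trunc k (X 0 x) = X 0 x) sequentially"
      unfolding eventually_sequentially trunc_def using K by (intro exI[of _ K]) auto
    then show "(\<lambda>k. trunc k (X 0 x)) \<longlonglongrightarrow> X 0 x" by (rule tendsto_eventually)
  qed
  show "AE x in M. norm (trunc k (X 0 x)) \<le> X 0 x" for k
    using trunc_bounds[OF nonneg] by (intro AE_I2) simp
qed (use integrable_X0 in simp_all)

definition centred_trunc :: "nat \<Rightarrow> 'a \<Rightarrow> real" where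
  "centred_trunc k x = trunc k (X k x) - (\<integral>y. trunc k (X 0 y) \<partial>M)"

lemma centred_trunc_measurable [measurable]: "centred_trunc k \<in> borel_measurable M"
  unfolding centred_trunc_def by measurable

lemma centred_trunc_sum: "trunc_sum n x - trunc_sum_mean n = (\<Sum>k\<in>{1..n}. centred_trunc k x)"
  unfolding trunc_sum_def trunc_sum_mean_def centred_trunc_def by (simp add: sum_subtractf)

lemma centred_trunc_indep: "indep_vars (\<lambda>_. borel) centred_trunc UNIV"
  unfolding centred_trunc_def
  by (rule indep_vars_compose2[OF indep, where Y="\<lambda>k r. trunc k r - (\<integral>y. trunc k (X 0 y) \<partial>M)"]) measurable

lemma centred_trunc_moments:
  shows "integrable M (centred_trunc k)" and "integrable M (\<lambda>x. (centred_trunc k x)^2)"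
    and "expectation (centred_trunc k) = 0"
proof -
  define m where "m = (\<integral>y. trunc k (X 0 y) \<partial>M)"
  have int_trunc: "integrable M (\<lambda>x. trunc k (X k x))"
    by (rule integrable_const_bound[where B="real k"]) (use trunc_bounds nonneg in \<open>auto intro!: AE_I2\<close>)
  have bound: "\<bar>centred_trunc k x\<bar> \<le> real k + \<bar>m\<bar>" for x
    unfolding centred_trunc_def m_def[symmetric] using trunc_bounds[OF nonneg, of k k x] by linarith
  show "integrable M (centred_trunc k)"
    by (rule integrable_const_bound[where B="real k + \<bar>m\<bar>"]) (use bound in auto)
  show "integrable M (\<lambda>x. (centred_trunc k x)^2)"
  proof (rule integrable_const_bound[where B="(real k + \<bar>m\<bar>)^2"])
    show "AE x in M. norm ((centred_trunc k x)^2) \<le> (real k + \<bar>m\<bar>)^2"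
      using power_mono[OF bound abs_ge_zero, of _ 2] by (intro AE_I2) simp
  qed simp
  show "expectation (centred_trunc k) = 0"
    unfolding centred_trunc_def using int_trunc integral_ident[of "trunc k" k] by (simp add: prob_space)
qed

lemma centred_trunc_variance:
  assumes "k \<le> n"
  shows "(\<integral>x. (centred_trunc k x)^2 \<partial>M) \<le> (\<integral>x. (trunc n (X 0 x))^2 \<partial>M)"
proof -
  define m where "m = (\<integral>y. trunc k (X 0 y) \<partial>M)"
  have m: "m = (\<integral>x. trunc k (X k x) \<partial>M)" unfolding m_def by (rule integral_ident[symmetric]) simp
  have int_trunc: "integrable M (\<lambda>x. trunc k (X k x))"
    by (rule integrable_const_bound[where B="real k"]) (use trunc_bounds nonneg in \<open>auto intro!: AE_I2\<close>)
  have "(\<integral>x. (centred_trunc k x)^2 \<partial>M) = (\<integral>x. (trunc k (X k x))^2 - 2 * m * trunc k (X k x) + m^2 \<partial>M)"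
    unfolding centred_trunc_def m_def[symmetric]
    by (rule Bochner_Integration.integral_cong) (simp_all add: power2_eq_square algebra_simps)
  also have "\<dots> = (\<integral>x. (trunc k (X k x))^2 \<partial>M) - m^2"
    using int_trunc integrable_trunc_sq[of k k] by (simp add: m prob_space power2_eq_square)
  also have "\<dots> \<le> (\<integral>x. (trunc k (X 0 x))^2 \<partial>M)"
    using integral_ident[of "\<lambda>r. (trunc k r)^2" k] by simp
  also have "\<dots> \<le> (\<integral>x. (trunc n (X 0 x))^2 \<partial>M)"
    by (intro integral_mono integrable_trunc_sq trunc_mono_level[OF assms nonneg])
  finally show ?thesis .
qed

text \<open>Chebyshev bound for the truncated sums, using additivity of variances.\<close>
lemma trunc_sum_deviation:
  assumes n: "n \<ge> 1" and e: "e > 0"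
  shows "measure M {x\<in>space M. e * real n \<le> \<bar>trunc_sum n x - trunc_sum_mean n\<bar>}
           \<le> (\<integral>x. (trunc n (X 0 x))^2 \<partial>M) / (e^2 * real n)"
proof -
  note var = second_moment_sum_indep[OF centred_trunc_indep centred_trunc_moments finite_atLeastAtMost, of 1 n]
  have "(\<integral>x. (trunc_sum n x - trunc_sum_mean n)^2 \<partial>M)
      \<le> (\<Sum>k\<in>{1..n}. \<integral>x. (trunc n (X 0 x))^2 \<partial>M)"
    unfolding centred_trunc_sum var(2) by (intro sum_mono centred_trunc_variance) simp
  then have var_bound: "(\<integral>x. (trunc_sum n x - trunc_sum_mean n)^2 \<partial>M) \<le> real n * (\<integral>x. (trunc n (X 0 x))^2 \<partial>M)"
    by simp
  have "measure M {x\<in>space M. e * real n \<le> \<bar>trunc_sum n x - trunc_sum_mean n\<bar>}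
      \<le> (\<integral>x. (trunc_sum n x - trunc_sum_mean n)^2 \<partial>M) / (e * real n)^2"
    using n e var(1) unfolding centred_trunc_sum[symmetric] by (intro second_moment_method) auto
  also have "\<dots> \<le> real n * (\<integral>x. (trunc n (X 0 x))^2 \<partial>M) / (e * real n)^2"
    using var_bound by (rule divide_right_mono) simp
  also have "\<dots> = (\<integral>x. (trunc n (X 0 x))^2 \<partial>M) / (e^2 * real n)"
    using n e by (simp add: field_simps power2_eq_square)
  finally show ?thesis .
qed

text \<open>Along \<open>k\<^sub>j = \<lfloor>\<alpha>\<^sup>j\<rfloor>\<close> the Chebyshev bounds are summable (by \<open>trunc_geometric_sum\<close>), so by
  Borel--Cantelli the normalised deviations are eventually below any tolerance.\<close>
lemma geometric_deviation_small:
  assumes a: "\<alpha> > 1" and e: "e > 0"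
  defines "k \<equiv> geom_seq \<alpha>"
  shows "AE x in M. eventually (\<lambda>j. \<bar>(trunc_sum (k j) x - trunc_sum_mean (k j)) / real (k j)\<bar> < e) sequentially"
proof -
  have k1: "k j \<ge> 1" for j unfolding k_def using geom_seq_bounds(1)[OF a] .
  define A where "A j = {x\<in>space M. e * real (k j) \<le> \<bar>trunc_sum (k j) x - trunc_sum_mean (k j)\<bar>}" for j
  have A_sets [measurable]: "A j \<in> sets M" for j unfolding A_def by measurable
  define q where "q j = (\<integral>x. (trunc (k j) (X 0 x))^2 / real (k j) \<partial>M) / e^2" for j
  have mq: "measure M (A j) \<le> q j" for j
    using trunc_sum_deviation[OF k1 e] unfolding A_def q_def by (simp add: mult.commute)
  have q0: "q j \<ge> 0" for j unfolding q_def by (intro divide_nonneg_nonneg integral_nonneg_AE) auto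
  have qsum: "(\<Sum>j<N. q j) \<le> 2 * (expectation (X 0) * \<alpha> / (\<alpha> - 1)) / e^2" for N
  proof -
    have "(\<Sum>j<N. q j) = (\<integral>x. (\<Sum>j<N. (trunc (k j) (X 0 x))^2 / real (k j)) \<partial>M) / e^2"
      unfolding q_def by (simp add: sum_divide_distrib integrable_trunc_sq Bochner_Integration.integral_sum)
    also have "(\<integral>x. (\<Sum>j<N. (trunc (k j) (X 0 x))^2 / real (k j)) \<partial>M) \<le> (\<integral>x. 2 * (X 0 x * \<alpha> / (\<alpha> - 1)) \<partial>M)"
      unfolding k_def using integrable_X0
      by (intro integral_mono trunc_geometric_sum[OF a nonneg] Bochner_Integration.integrable_sum)
         (simp_all add: integrable_trunc_sq)
    finally show ?thesis by (simp add: divide_right_mono)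
  qed
  have "summable (\<lambda>j. measure M (A j))"
    by (rule summable_comparison_test'[OF summableI_nonneg_bounded[OF q0 qsum]]) (simp add: mq)
  then have "AE x in M. eventually (\<lambda>j. x \<in> space M - A j) sequentially"
    by (intro borel_cantelli_AE1 A_sets) (simp_all add: less_top[symmetric])
  then show ?thesis
    by (rule AE_mp[OF _ AE_I2]) (auto elim!: eventually_mono simp: A_def abs_div divide_less_eq mult.commute k1)
qed

lemma geometric_subsequence_converges:
  assumes a: "\<alpha> > 1"
  shows "AE x in M. (\<lambda>j. trunc_sum (geom_seq \<alpha> j) x / real (geom_seq \<alpha> j)) \<longlonglongrightarrow> expectation (X 0)"
proof -
  define k where "k = geom_seq \<alpha>"
  have "AE x in M. \<forall>i::nat. eventually (\<lambda>j. \<bar>(trunc_sum (k j) x - trunc_sum_mean (k j)) / real (k j)\<bar> < 1 / real (Suc i)) sequentially"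
    unfolding AE_all_countable k_def by (intro allI geometric_deviation_small[OF a]) simp
  then show ?thesis
  proof (rule AE_mp[OF _ AE_I2], intro impI)
    fix x assume "\<forall>i::nat. eventually (\<lambda>j. \<bar>(trunc_sum (k j) x - trunc_sum_mean (k j)) / real (k j)\<bar> < 1 / real (Suc i)) sequentially"
    then have "(\<lambda>j. (trunc_sum (k j) x - trunc_sum_mean (k j)) / real (k j)) \<longlonglongrightarrow> 0"
      by (intro tendsto_zero_from_inverse_bounds) auto
    moreover have "(\<lambda>j. trunc_sum_mean (k j) / real (k j)) \<longlonglongrightarrow> expectation (X 0)"
      unfolding k_def using filterlim_compose[OF trunc_sum_mean_average geom_seq_lim(1)[OF a]] .
    ultimately have "(\<lambda>j. (trunc_sum (k j) x - trunc_sum_mean (k j)) / real (k j) + trunc_sum_mean (k j) / real (k j))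
        \<longlonglongrightarrow> 0 + expectation (X 0)"
      by (rule tendsto_add)
    then show "(\<lambda>j. trunc_sum (geom_seq \<alpha> j) x / real (geom_seq \<alpha> j)) \<longlonglongrightarrow> expectation (X 0)"
      unfolding k_def by (simp add: diff_divide_distrib)
  qed
qed

text \<open>The strong law for the truncated sums: interpolate between the geometric subsequences
  for ratios \<open>\<alpha>\<^sub>i = 1 + 1/(i+1)\<close> using monotonicity of the partial sums.\<close>
lemma trunc_sum_average_converges:
  "AE x in M. (\<lambda>n. trunc_sum n x / real n) \<longlonglongrightarrow> expectation (X 0)"
proof -
  define \<alpha> where "\<alpha> i = 1 + 1 / real (Suc i)" for i
  have \<alpha>1: "\<alpha> i > 1" for i unfolding \<alpha>_def by auto
  have "AE x in M. \<forall>i. (\<lambda>j. trunc_sum (geom_seq (\<alpha> i) j) x / real (geom_seq (\<alpha> i) j)) \<longlonglongrightarrow> expectation (X 0)"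
    unfolding AE_all_countable using geometric_subsequence_converges[OF \<alpha>1] by auto
  then show ?thesis
  proof (rule AE_mp[OF _ AE_I2], intro impI)
    fix x assume H: "\<forall>i. (\<lambda>j. trunc_sum (geom_seq (\<alpha> i) j) x / real (geom_seq (\<alpha> i) j)) \<longlonglongrightarrow> expectation (X 0)"
    show "(\<lambda>n. trunc_sum n x / real n) \<longlonglongrightarrow> expectation (X 0)"
    proof (rule tendsto_from_ratio_bounds)
      show "expectation (X 0) \<ge> 0" using nonneg by (simp add: integral_nonneg_AE)
      fix i :: nat and \<delta> :: real assume "\<delta> > 0"
      have "eventually (\<lambda>n. expectation (X 0) / \<alpha> i - \<delta> < trunc_sum n x / real n
                 \<and> trunc_sum n x / real n < \<alpha> i * expectation (X 0) + \<delta>) sequentially"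
        by (rule interpolate_monotone_averages[OF trunc_sum_mono trunc_sum_nonneg geom_seq_bounds(1)[OF \<alpha>1]
            geom_seq_lim(1)[OF \<alpha>1] H[rule_format, of i] geom_seq_lim(2)[OF \<alpha>1]])
           (use \<alpha>1[of i] \<open>\<delta> > 0\<close> in auto)
      then show "eventually (\<lambda>n. expectation (X 0) / (1 + 1 / real (Suc i)) - \<delta> < trunc_sum n x / real n
                 \<and> trunc_sum n x / real n < (1 + 1 / real (Suc i)) * expectation (X 0) + \<delta>) sequentially"
        unfolding \<alpha>_def .
    qed
  qed
qed

theorem slln_nonneg:
  "AE x in M. (\<lambda>n. (\<Sum>t\<in>{1..n}. X t x) / real n) \<longlonglongrightarrow> expectation (X 0)"
  using truncation_negligible trunc_sum_average_converges
proof eventually_elim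
  case (elim x)
  then have "(\<lambda>n. ((\<Sum>t\<in>{1..n}. X t x) - trunc_sum n x) / real n + trunc_sum n x / real n)
      \<longlonglongrightarrow> 0 + expectation (X 0)"
    by (rule tendsto_add)
  then show ?case by (simp add: diff_divide_distrib)
qed

end

text \<open>The strong law of large numbers for i.i.d. integrable real variables, by splitting into
  positive and negative parts.\<close>
theorem (in prob_space) slln:
  fixes X :: "nat \<Rightarrow> 'a \<Rightarrow> real"
  assumes ind: "indep_vars (\<lambda>_. borel) X UNIV"
    and ident: "\<And>t. distr M borel (X t) = distr M borel (X 0)"
    and int: "integrable M (X 0)"
  shows "AE x in M. (\<lambda>n. (\<Sum>t\<in>{1..n}. X t x) / real n) \<longlonglongrightarrow> expectation (X 0)"
proof -
  have rv [measurable]: "X t \<in> borel_measurable M" for t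
    using ind unfolding indep_vars_def by simp
  have part: "iid_nonneg_seq M (\<lambda>t x. max (s * X t x) 0)" if s: "s \<in> {1, -1}" for s :: real
  proof
    have f [measurable]: "(\<lambda>r::real. max (s * r) 0) \<in> borel_measurable borel" by measurable
    show "indep_vars (\<lambda>_. borel) (\<lambda>t x. max (s * X t x) 0) UNIV"
      by (rule indep_vars_compose2[OF ind, where Y="\<lambda>_ r. max (s * r) 0"]) (rule f)
    show "distr M borel (\<lambda>x. max (s * X t x) 0) = distr M borel (\<lambda>x. max (s * X 0 x) 0)" for t
      by (rule distr_compose_same_distr[OF rv rv ident f])
    show "integrable M (\<lambda>x. max (s * X 0 x) 0)" using int by (intro integrable_max) auto
  qed simp
  have pos: "AE x in M. (\<lambda>n. (\<Sum>t\<in>{1..n}. max (X t x) 0) / real n) \<longlonglongrightarrow> expectation (\<lambda>x. max (X 0 x) 0)"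
    using iid_nonneg_seq.slln_nonneg[OF part[of 1]] by simp
  have neg: "AE x in M. (\<lambda>n. (\<Sum>t\<in>{1..n}. max (- X t x) 0) / real n) \<longlonglongrightarrow> expectation (\<lambda>x. max (- X 0 x) 0)"
    using iid_nonneg_seq.slln_nonneg[OF part[of "-1"]] by simp
  have split: "max r 0 - max (- r) 0 = r" for r :: real by auto
  have "expectation (X 0) = expectation (\<lambda>x. max (X 0 x) 0 - max (- X 0 x) 0)"
    using split by simp
  also have "\<dots> = expectation (\<lambda>x. max (X 0 x) 0) - expectation (\<lambda>x. max (- X 0 x) 0)"
    by (intro Bochner_Integration.integral_diff integrable_max) (use int in auto)
  finally have E: "expectation (X 0) = expectation (\<lambda>x. max (X 0 x) 0) - expectation (\<lambda>x. max (- X 0 x) 0)" .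
  from pos neg show ?thesis
  proof eventually_elim
    case (elim x)
    then have "(\<lambda>n. (\<Sum>t\<in>{1..n}. max (X t x) 0) / real n - (\<Sum>t\<in>{1..n}. max (- X t x) 0) / real n)
        \<longlonglongrightarrow> expectation (X 0)"
      unfolding E by (rule tendsto_diff)
    moreover have "(\<Sum>t\<in>{1..n}. max (X t x) 0) / real n - (\<Sum>t\<in>{1..n}. max (- X t x) 0) / real n
        = (\<Sum>t\<in>{1..n}. X t x) / real n" for n
      by (simp add: diff_divide_distrib[symmetric] sum_subtractf[symmetric] split)
    ultimately show ?case by simp
  qed
qed

section \<open>Determinants of positive (semi)definite matrices\<close>

lemma row_lambda: "row i (\<chi> j. f j) = f i"
  by (simp add: row_def vec_eq_iff)

lemma det_rows_add_multiple:
  fixes A :: "real^'n^'n"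
  assumes "finite S" "k \<notin> S"
  shows "det (\<chi> i. if i \<in> S then row i A + c i *s row k A else row i A) = det A"
  using assms
proof (induction S rule: finite_induct)
  case empty
  have "(\<chi> i. row i A) = A" by (vector row_def)
  then show ?case by simp
next
  case (insert j S)
  define A' where "A' = (\<chi> i. if i \<in> S then row i A + c i *s row k A else row i A)"
  have rk: "row k A' = row k A" using insert.prems unfolding A'_def row_def by (simp add: vec_eq_iff)
  have rj: "row j A' = row j A" using insert.hyps unfolding A'_def row_def by (simp add: vec_eq_iff)
  have ri: "row i A' = (if i \<in> S then row i A + c i *s row k A else row i A)" for i
    unfolding A'_def row_def by (simp add: vec_eq_iff)
  have jk: "j \<noteq> k" using insert.prems by auto
  have "(\<chi> i. if i \<in> insert j S then row i A + c i *s row k A else row i A)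
      = (\<chi> i. if i = j then row j A' + c j *s row k A' else row i A')"
    using insert.hyps insert.prems unfolding rk rj ri by (auto simp: vec_eq_iff)
  also have "det \<dots> = det A'" by (rule det_row_operation[OF jk])
  also have "\<dots> = det A" unfolding A'_def using insert by simp
  finally show ?case .
qed

lemma det_shear_rows:
  fixes c :: "'n::finite \<Rightarrow> real"
  shows "det (\<chi> i. if i = k then axis k 1 else axis i 1 - c i *s axis k 1 :: real^'n^'n) = 1"
proof -
  define B :: "real^'n^'n" where "B = (\<chi> i. if i = k then axis k 1 else axis i 1 - c i *s axis k 1)"
  have r: "row i B = (if i = k then axis k 1 else axis i 1 - c i *s axis k 1)" for i
    unfolding B_def row_lambda ..
  have "det B = det (\<chi> i. if i \<in> UNIV - {k} then row i B + c i *s row k B else row i B)"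
    by (rule det_rows_add_multiple[symmetric]) auto
  also have "(\<chi> i. if i \<in> UNIV - {k} then row i B + c i *s row k B else row i B) = (mat 1 :: real^'n^'n)"
    unfolding r by (auto simp: vec_eq_iff mat_def axis_def)
  finally show ?thesis unfolding B_def by simp
qed

text \<open>Matrix determinant lemma: \<open>det (I + w v\<^sup>T) = 1 + v \<bullet> w\<close>, by row reduction along a row
  \<open>k\<close> with \<open>w\<^sub>k \<noteq> 0\<close>.\<close>
lemma det_identity_plus_rank_one:
  fixes w v :: "real^'n"
  shows "det (mat 1 + (\<chi> i j. w$i * v$j)) = 1 + v \<bullet> w"
proof (cases "w = 0")
  case True
  have "(\<chi> i j. w$i * v$j) = (0::real^'n^'n)" by (simp add: True vec_eq_iff)
  then show ?thesis by (simp add: True)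
next
  case False
  then obtain k where wk: "w$k \<noteq> 0" by (auto simp: vec_eq_iff)
  define B :: "real^'n^'n" where "B = mat 1 + (\<chi> i j. w$i * v$j)"
  define e where "e i = (axis i 1 :: real^'n)" for i
  have e_comp: "e i $ j = (if i = j then 1 else 0)" for i j unfolding e_def axis_def by simp
  have rowB: "row i B = e i + w$i *s v" for i
    unfolding B_def row_def e_def by (simp add: vec_eq_iff mat_def axis_def)
  txt \<open>Subtracting \<open>(w\<^sub>i/w\<^sub>k)\<close> times row \<open>k\<close> leaves rows \<open>e\<^sub>i - (w\<^sub>i/w\<^sub>k) e\<^sub>k\<close> for \<open>i \<noteq> k\<close>.\<close>
  define S where "S = UNIV - {k}"
  define B1 where "B1 = (\<chi> i. if i \<in> S then row i B + (- (w$i / w$k)) *s row k B else row i B)"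
  have dB1: "det B1 = det B" unfolding B1_def S_def by (rule det_rows_add_multiple) auto
  have rowB1: "row i B1 = (if i = k then e k + w$k *s v else e i - (w$i / w$k) *s e k)" for i
  proof -
    have "row i B1 = (if i \<in> S then row i B + (- (w$i / w$k)) *s row k B else row i B)"
      unfolding B1_def by (simp add: row_lambda)
    then show ?thesis unfolding rowB S_def using wk by (auto simp: vec_eq_iff e_comp field_simps)
  qed
  txt \<open>Adding a combination \<open>x\<close> of these rows turns row \<open>k\<close> into \<open>(1 + v \<bullet> w) e\<^sub>k\<close>.\<close>
  define x where "x = (\<Sum>i\<in>S. (- (w$k * v$i)) *s row i B1)"
  have xspan: "x \<in> vec.span {row j B1 | j. j \<noteq> k}"
    unfolding x_def S_def by (intro vec.span_sum vec.span_scale vec.span_base) auto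
  have rk: "row k B1 + x = (1 + v \<bullet> w) *s e k"
  proof (subst vec_eq_iff, intro allI)
    fix j
    have xj: "x $ j = (\<Sum>i\<in>S. - (w$k * v$i) * (e i $ j - (w$i / w$k) * e k $ j))"
      unfolding x_def S_def using wk by (simp add: sum_component rowB1, intro sum.cong) (auto simp: field_simps)
    show "(row k B1 + x) $ j = ((1 + v \<bullet> w) *s e k) $ j"
    proof (cases "j = k")
      case True
      have "x $ j = (\<Sum>i\<in>S. v$i * w$i)" unfolding xj using wk True unfolding S_def
        by (intro sum.cong) (auto simp: e_comp field_simps)
      moreover have "v \<bullet> w = v$k * w$k + (\<Sum>i\<in>S. v$i * w$i)"
        unfolding inner_vec_def S_def by (simp add: sum.remove[of UNIV k])
      ultimately show ?thesis using True rowB1[of k] by (simp add: e_comp algebra_simps)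
    next
      case False
      have "x $ j = (\<Sum>i\<in>S. if i = j then - (w$k * v$j) else 0)" unfolding xj S_def using False
        by (intro sum.cong) (auto simp: e_comp)
      also have "\<dots> = - (w$k * v$j)" using False unfolding S_def by simp
      finally show ?thesis using False rowB1[of k] by (simp add: e_comp)
    qed
  qed
  txt \<open>Factoring out \<open>1 + v \<bullet> w\<close> leaves a shear of the identity.\<close>
  have "det B1 = det (\<chi> i. if i = k then row k B1 + x else row i B1)"
    using det_row_span[OF xspan] by simp
  also have "(\<chi> i. if i = k then row k B1 + x else row i B1) = (\<chi> i. if i = k then (1 + v \<bullet> w) *s e k else row i B1)"
    unfolding rk ..
  also have "det \<dots> = (1 + v \<bullet> w) * det (\<chi> i. if i = k then e k else row i B1)"
    by (rule det_row_mul)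
  also have "(\<chi> i. if i = k then e k else row i B1)
      = (\<chi> i. if i = k then axis k 1 else axis i 1 - (w$i / w$k) *s axis k 1)"
    unfolding rowB1 e_def by (simp add: vec_eq_iff)
  also have "det \<dots> = 1" by (rule det_shear_rows)
  finally show ?thesis using dB1 unfolding B_def by simp
qed

definition psd_matrix :: "real^'n^'n \<Rightarrow> bool" where
  "psd_matrix A \<longleftrightarrow> transpose A = A \<and> (\<forall>x. 0 \<le> x \<bullet> (A *v x))"
definition pd_matrix :: "real^'n^'n \<Rightarrow> bool" where
  "pd_matrix A \<longleftrightarrow> transpose A = A \<and> (\<forall>x. x \<noteq> 0 \<longrightarrow> 0 < x \<bullet> (A *v x))"

lemma symmetric_entry: "transpose A = A \<Longrightarrow> A$i$j = A$j$i"
  by (metis transpose_def vec_lambda_beta)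

lemma quad_form_sym:
  fixes D :: "real^'n^'n"
  assumes "transpose D = D"
  shows "x \<bullet> (D *v y) = y \<bullet> (D *v x)"
proof -
  have "x \<bullet> (D *v y) = (\<Sum>i\<in>UNIV. \<Sum>j\<in>UNIV. x$i * D$i$j * y$j)"
    by (simp add: inner_vec_def matrix_vector_mult_def sum_distrib_left mult.assoc)
  also have "\<dots> = (\<Sum>j\<in>UNIV. \<Sum>i\<in>UNIV. x$i * D$i$j * y$j)" by (rule sum.swap)
  also have "\<dots> = y \<bullet> (D *v x)"
    using symmetric_entry[OF assms] by (simp add: inner_vec_def matrix_vector_mult_def sum_distrib_left mult_ac)
  finally show ?thesis .
qed

lemma quad_form_expand:
  fixes D :: "real^'n^'n"
  assumes "transpose D = D"
  shows "(x + s *\<^sub>R y) \<bullet> (D *v (x + s *\<^sub>R y)) = x \<bullet> (D *v x) + 2 * s * (x \<bullet> (D *v y)) + s^2 * (y \<bullet> (D *v y))"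
  using quad_form_sym[OF assms, of y x]
  by (simp add: matrix_vector_right_distrib matrix_vector_mult_scaleR inner_add_left inner_add_right power2_eq_square algebra_simps)

lemma psd_cauchy_schwarz:
  fixes D :: "real^'n^'n"
  assumes "psd_matrix D"
  shows "(x \<bullet> (D *v y))^2 \<le> (x \<bullet> (D *v x)) * (y \<bullet> (D *v y))"
proof -
  define a where "a = x \<bullet> (D *v x)"
  define b where "b = x \<bullet> (D *v y)"
  define c where "c = y \<bullet> (D *v y)"
  have sym: "transpose D = D" using assms unfolding psd_matrix_def by auto
  have q: "0 \<le> a + 2 * s * b + s^2 * c" for s
    using assms quad_form_expand[OF sym, of x s y] unfolding psd_matrix_def a_def b_def c_def by metis
  show ?thesis
  proof (cases "c = 0")
    case True
    have "b = 0"
    proof (rule ccontr)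
      assume "b \<noteq> 0"
      have "0 \<le> a + 2 * (- (a + 1) / (2 * b)) * b" using q[of "- (a + 1) / (2 * b)"] True by simp
      also have "\<dots> = -1" using \<open>b \<noteq> 0\<close> by (simp add: field_simps)
      finally show False by simp
    qed
    then show ?thesis using True unfolding a_def b_def c_def by simp
  next
    case False
    have c0: "c > 0" using q[of 0] False quad_form_expand[OF sym, of 0 1 y] assms unfolding psd_matrix_def c_def
      by (metis less_eq_real_def)
    have "0 \<le> a + 2 * (- b / c) * b + (- b / c)^2 * c" by (rule q)
    also have "\<dots> = a - b^2 / c" using c0 by (simp add: field_simps power2_eq_square)
    finally have "b^2 \<le> a * c" using c0 by (simp add: field_simps)
    then show ?thesis unfolding a_def b_def c_def .
  qed
qed

lemma quad_form_axis: "axis k 1 \<bullet> (D *v axis l 1) = D$k$l"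
  by (simp add: inner_commute[of "axis k 1"] cart_eq_inner_axis[symmetric] matrix_vector_mult_basis column_def)

lemma psd_diag_nonneg: "psd_matrix D \<Longrightarrow> D$i$i \<ge> 0"
  using quad_form_axis[of i D i] unfolding psd_matrix_def by metis

lemma psd_zero_diag_row:
  fixes D :: "real^'n^'n"
  assumes "psd_matrix D" "D$i$i = 0"
  shows "D$i$j = 0"
proof -
  have "(axis i 1 \<bullet> (D *v axis j 1))^2 \<le> (axis i 1 \<bullet> (D *v axis i 1)) * (axis j 1 \<bullet> (D *v axis j 1))"
    by (rule psd_cauchy_schwarz[OF assms(1)])
  then have "(D$i$j)^2 \<le> 0" using assms(2) by (simp add: quad_form_axis)
  then show ?thesis by simp
qed

lemma continuous_on_det:
  assumes "\<And>i j. continuous_on S (\<lambda>t. F t $ i $ j)"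
  shows "continuous_on S (\<lambda>t. det (F t :: real^'n^'n))"
  unfolding det_def by (intro continuous_intros assms)

lemma tendsto_det:
  assumes "\<And>i j. ((\<lambda>t. F t $ i $ j) \<longlongrightarrow> G $ i $ j) L"
  shows "((\<lambda>t. det (F t :: real^'n^'n)) \<longlongrightarrow> det G) L"
  unfolding det_def by (intro tendsto_intros assms)

text \<open>A positive definite matrix is invertible and, by connecting it to the identity through
  positive definite matrices (intermediate value theorem), has positive determinant.\<close>
lemma pd_invertible:
  fixes A :: "real^'n^'n"
  assumes "pd_matrix A"
  shows "invertible A"
proof -
  have "\<forall>x. A *v x = 0 \<longrightarrow> x = 0"
  proof (intro allI impI)
    fix x assume "A *v x = 0"
    then show "x = 0" using assms unfolding pd_matrix_def by (metis inner_zero_right less_irrefl)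
  qed
  then show ?thesis unfolding invertible_left_inverse matrix_left_invertible_ker .
qed

lemma pd_det_pos:
  fixes A :: "real^'n^'n"
  assumes A: "pd_matrix A"
  shows "det A > 0"
proof (rule ccontr)
  assume "\<not> det A > 0"
  then have le: "det A \<le> 0" by simp
  define P where "P t = (1 - t) *\<^sub>R (mat 1 :: real^'n^'n) + t *\<^sub>R A" for t :: real
  have cont: "continuous_on {0..1} (\<lambda>t. det (P t))"
    by (rule continuous_on_det) (simp add: P_def, intro continuous_intros)
  have "\<exists>t. 0 \<le> t \<and> t \<le> 1 \<and> det (P t) = 0"
    by (rule IVT2'[OF _ _ _ cont]) (use le in \<open>simp_all add: P_def\<close>)
  then obtain t where t: "0 \<le> t" "t \<le> 1" "det (P t) = 0" by blast
  have "pd_matrix (P t)"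
    unfolding pd_matrix_def
  proof (intro conjI allI impI)
    show "transpose (P t) = P t" using A unfolding pd_matrix_def P_def
      by (simp add: transpose_def vec_eq_iff mat_def)
    fix x :: "real^'n" assume x: "x \<noteq> 0"
    have eq: "x \<bullet> (P t *v x) = (1 - t) * (x \<bullet> x) + t * (x \<bullet> (A *v x))"
      unfolding P_def by (simp add: matrix_vector_mult_add_rdistrib scaleR_matrix_vector_assoc[symmetric] inner_add_right)
    have "x \<bullet> x > 0" using x by simp
    moreover have "x \<bullet> (A *v x) > 0" using A x unfolding pd_matrix_def by auto
    ultimately have "(1 - t) * (x \<bullet> x) + t * (x \<bullet> (A *v x)) > 0"
      using t by (cases "t = 0") (auto intro!: add_nonneg_pos mult_nonneg_nonneg)
    then show "0 < x \<bullet> (P t *v x)" unfolding eq .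
  qed
  then have "det (P t) \<noteq> 0" using pd_invertible invertible_det_nz by blast
  with t show False by simp
qed

text \<open>Rank-one update: \<open>A + u u\<^sup>T\<close> stays positive definite, and its determinant is
  \<open>det A (1 + u\<^sup>T A\<^sup>-\<^sup>1 u) \<ge> det A\<close>, with equality only for \<open>u = 0\<close>.\<close>
lemma outer_mult_vec: "outer a b *v x = (b \<bullet> x) *\<^sub>R (a :: real^'n)"
  by (simp add: outer_def vec_eq_iff matrix_vector_mult_def inner_vec_def sum_distrib_left mult_ac)

lemma pd_rank_one_update:
  fixes A :: "real^'n^'n"
  assumes A: "pd_matrix A"
  shows "pd_matrix (A + outer u u)" "det A \<le> det (A + outer u u)" "det (A + outer u u) = det A \<Longrightarrow> u = 0"
proof -
  have symA: "transpose A = A" using A unfolding pd_matrix_def by auto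
  show pd: "pd_matrix (A + outer u u)"
    unfolding pd_matrix_def
  proof (intro conjI allI impI)
    show "transpose (A + outer u u) = A + outer u u"
      using symA by (simp add: transpose_def outer_def vec_eq_iff mult.commute)
    fix x :: "real^'n" assume x: "x \<noteq> 0"
    have "x \<bullet> ((A + outer u u) *v x) = x \<bullet> (A *v x) + (u \<bullet> x)^2"
      by (simp add: matrix_vector_mult_add_rdistrib outer_mult_vec inner_add_right inner_commute power2_eq_square)
    moreover have "x \<bullet> (A *v x) > 0" using A x unfolding pd_matrix_def by auto
    ultimately show "0 < x \<bullet> ((A + outer u u) *v x)" by (simp add: add_pos_nonneg)
  qed
  obtain B where B: "A ** B = mat 1" using pd_invertible[OF A] unfolding invertible_right_inverse by blast
  define w where "w = B *v u"
  have Aw: "A *v w = u" unfolding w_def matrix_vector_mul_assoc B by simp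
  have fac: "A + outer u u = A ** (mat 1 + (\<chi> i j. w$i * u$j))"
  proof -
    have "A ** (\<chi> i j. w$i * u$j) = outer u u"
      unfolding outer_def Aw[symmetric]
      by (simp add: vec_eq_iff matrix_matrix_mult_def matrix_vector_mult_def sum_distrib_right mult_ac)
    then show ?thesis by (simp add: matrix_add_ldistrib)
  qed
  have d: "det (A + outer u u) = det A * (1 + u \<bullet> w)"
    unfolding fac det_mul det_identity_plus_rank_one ..
  have uw: "u \<bullet> w = w \<bullet> (A *v w)" unfolding Aw by (simp add: inner_commute)
  have uw0: "u \<bullet> w \<ge> 0" unfolding uw using A unfolding pd_matrix_def by (cases "w = 0") (auto intro: less_imp_le)
  have dA: "det A > 0" by (rule pd_det_pos[OF A])
  show "det A \<le> det (A + outer u u)" unfolding d using dA uw0 by (simp add: algebra_simps)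
  assume "det (A + outer u u) = det A"
  then have "u \<bullet> w = 0" unfolding d using dA by (simp add: algebra_simps)
  then have "w = 0" unfolding uw using A unfolding pd_matrix_def by (metis less_irrefl)
  then show "u = 0" using Aw by simp
qed

text \<open>One step of a Cholesky-type decomposition: subtracting a suitable rank-one matrix from a
  psd matrix \<open>D\<close> keeps it psd, kills the \<open>i\<close>-th diagonal entry and keeps existing zeros.\<close>
lemma psd_peel_rank_one:
  fixes D :: "real^'n^'n"
  assumes D: "psd_matrix D" and di: "D$i$i \<noteq> 0"
  obtains u where "psd_matrix (D - outer u u)" "(D - outer u u)$i$i = 0"
    "\<And>j. D$j$j = 0 \<Longrightarrow> (D - outer u u)$j$j = 0"
proof -
  have symD: "transpose D = D" using D unfolding psd_matrix_def by auto
  define d where "d = D$i$i"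
  have dpos: "d > 0" using psd_diag_nonneg[OF D, of i] di unfolding d_def by simp
  define u where "u = (1 / sqrt d) *\<^sub>R (D *v axis i 1)"
  have uj: "u$j = D$j$i / sqrt d" for j
    unfolding u_def by (simp add: matrix_vector_mult_basis column_def)
  have oij: "(outer u u)$j$l = D$j$i * D$l$i / d" for j l
    unfolding outer_def using dpos by (simp add: uj real_sqrt_mult[symmetric])
  show ?thesis
  proof
    show "(D - outer u u)$i$i = 0" using dpos by (simp add: oij d_def power2_eq_square)
    show "(D - outer u u)$j$j = 0" if "D$j$j = 0" for j
      using psd_zero_diag_row[OF D that, of i] that by (simp add: oij)
    show "psd_matrix (D - outer u u)"
      unfolding psd_matrix_def
    proof (intro conjI allI)
      show "transpose (D - outer u u) = D - outer u u"
        using symD by (simp add: transpose_def vec_eq_iff oij mult.commute)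
      fix x :: "real^'n"
      have cs: "(x \<bullet> (D *v axis i 1))^2 \<le> (x \<bullet> (D *v x)) * (axis i 1 \<bullet> (D *v axis i 1))"
        by (rule psd_cauchy_schwarz[OF D])
      have dd: "axis i 1 \<bullet> (D *v axis i 1) = d"
        unfolding d_def by (rule quad_form_axis)
      have ux: "u \<bullet> x = (x \<bullet> (D *v axis i 1)) / sqrt d" unfolding u_def by (simp add: inner_commute)
      have "(u \<bullet> x)^2 = (x \<bullet> (D *v axis i 1))^2 / d" unfolding ux using dpos by (simp add: power_divide)
      also have "\<dots> \<le> x \<bullet> (D *v x)" using cs dpos unfolding dd by (simp add: divide_le_eq)
      finally have le: "(u \<bullet> x)^2 \<le> x \<bullet> (D *v x)" .
      have "x \<bullet> ((D - outer u u) *v x) = x \<bullet> (D *v x) - (u \<bullet> x)^2"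
        by (simp add: matrix_vector_mult_diff_rdistrib outer_mult_vec inner_diff_right inner_commute power2_eq_square)
      then show "0 \<le> x \<bullet> ((D - outer u u) *v x)" using le by simp
    qed
  qed
qed

text \<open>Monotonicity of the determinant: for \<open>A\<close> pd and \<open>D\<close> psd, \<open>det A \<le> det (A + D)\<close> with
  equality only if \<open>D = 0\<close>; induction on the number of nonzero diagonal entries of \<open>D\<close>,
  peeling off one rank-one term at a time.\<close>
lemma det_mono_psd_count:
  fixes D :: "real^'n^'n"
  shows "card {i. D$i$i \<noteq> 0} = n \<Longrightarrow> psd_matrix D \<Longrightarrow> pd_matrix A \<Longrightarrow>
    det A \<le> det (A + D) \<and> (det (A + D) = det A \<longrightarrow> D = 0)"
proof (induction n arbitrary: D A rule: less_induct)
  case (less n)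
  show ?case
  proof (cases "{i. D$i$i \<noteq> 0} = {}")
    case True
    then have "D = 0" using psd_zero_diag_row[OF less.prems(2)] by (auto simp: vec_eq_iff)
    then show ?thesis by simp
  next
    case False
    then obtain i where di: "D$i$i \<noteq> 0" by auto
    obtain u where u: "psd_matrix (D - outer u u)" "(D - outer u u)$i$i = 0"
      "\<And>j. D$j$j = 0 \<Longrightarrow> (D - outer u u)$j$j = 0"
      using psd_peel_rank_one[OF less.prems(2) di] by blast
    define D' where "D' = D - outer u u"
    define A' where "A' = A + outer u u"
    have sub: "{j. D'$j$j \<noteq> 0} \<subseteq> {j. D$j$j \<noteq> 0} - {i}" using u unfolding D'_def by auto
    have "card {j. D'$j$j \<noteq> 0} < n"
    proof -
      have "card {j. D'$j$j \<noteq> 0} \<le> card ({j. D$j$j \<noteq> 0} - {i})" by (rule card_mono[OF _ sub]) simp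
      also have "\<dots> < card {j. D$j$j \<noteq> 0}" using di by (intro card_Diff1_less) auto
      finally show ?thesis using less.prems(1) by simp
    qed
    from less.IH[OF this refl, of A'] u(1) pd_rank_one_update(1)[OF less.prems(3), of u]
    have IH: "det A' \<le> det (A' + D')" "det (A' + D') = det A' \<Longrightarrow> D' = 0"
      unfolding D'_def A'_def by auto
    have AD: "A + D = A' + D'" unfolding A'_def D'_def by simp
    have s1: "det A \<le> det A'" "det A' = det A \<Longrightarrow> u = 0"
      unfolding A'_def using pd_rank_one_update[OF less.prems(3), of u] by auto
    show ?thesis
    proof
      show "det A \<le> det (A + D)" unfolding AD using IH(1) s1(1) by linarith
      show "det (A + D) = det A \<longrightarrow> D = 0"
      proof
        assume "det (A + D) = det A"
        then have e1: "det (A' + D') = det A'" "det A' = det A" unfolding AD using IH(1) s1(1) by linarith+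
        have "D' = 0" by (rule IH(2)[OF e1(1)])
        moreover have "u = 0" by (rule s1(2)[OF e1(2)])
        ultimately show "D = 0" unfolding D'_def by (simp add: outer_def vec_eq_iff)
      qed
    qed
  qed
qed

lemma det_mono_psd:
  fixes D A :: "real^'n^'n"
  assumes "psd_matrix D" "pd_matrix A"
  shows "det A \<le> det (A + D)" "det (A + D) = det A \<Longrightarrow> D = 0"
  using det_mono_psd_count[OF refl assms] by auto

lemma psd_invertible_imp_pd:
  fixes A :: "real^'n^'n"
  assumes "psd_matrix A" "invertible A"
  shows "pd_matrix A"
  unfolding pd_matrix_def
proof (intro conjI allI impI)
  show "transpose A = A" using assms unfolding psd_matrix_def by auto
  fix x :: "real^'n" assume x: "x \<noteq> 0"
  show "0 < x \<bullet> (A *v x)"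
  proof (rule ccontr)
    assume "\<not> ?thesis"
    then have x0: "x \<bullet> (A *v x) = 0" using assms(1) unfolding psd_matrix_def by (metis less_eq_real_def)
    have "(A *v x) $ k = 0" for k
    proof -
      have "(axis k 1 \<bullet> (A *v x))^2 \<le> (axis k 1 \<bullet> (A *v axis k 1)) * (x \<bullet> (A *v x))"
        by (rule psd_cauchy_schwarz[OF assms(1)])
      then have "(axis k 1 \<bullet> (A *v x))^2 \<le> 0" using x0 by simp
      then have "axis k 1 \<bullet> (A *v x) = 0" by simp
      then show ?thesis by (simp add: inner_commute[of "axis k 1"] cart_eq_inner_axis[symmetric])
    qed
    then have "A *v x = 0" by (simp add: vec_eq_iff)
    then have "x = 0" using assms(2) unfolding invertible_left_inverse matrix_left_invertible_ker by blast
    with x show False by simp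
  qed
qed

section \<open>Second-moment matrices\<close>

definition second_moment :: "'a measure \<Rightarrow> ('a \<Rightarrow> real^'n) \<Rightarrow> real^'n^'n" where
  "second_moment M f = (\<chi> i j. \<integral>x. f x $ i * f x $ j \<partial>M)"

lemma pop_cov_second_moment: "pop_cov M f Y Z = second_moment M (\<lambda>x. Y x - f (Z x))"
  unfolding pop_cov_def second_moment_def ..

lemma second_moment_cong:
  "(\<And>x. x \<in> space M \<Longrightarrow> f x = g x) \<Longrightarrow> second_moment M f = second_moment M g"
  unfolding second_moment_def by (simp add: vec_eq_iff cong: Bochner_Integration.integral_cong)

text \<open>Second-moment matrices are positive semidefinite: \<open>y\<^sup>T E[f f\<^sup>T] y = E (y \<bullet> f)\<^sup>2\<close>.\<close>
lemma second_moment_psd: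
  fixes f :: "'a \<Rightarrow> real^'n"
  assumes int: "\<And>i j. integrable M (\<lambda>x. f x $ i * f x $ j)"
  shows "psd_matrix (second_moment M f)"
  unfolding psd_matrix_def second_moment_def
proof (intro conjI allI)
  show "transpose (\<chi> i j. \<integral>x. f x $ i * f x $ j \<partial>M) = (\<chi> i j. \<integral>x. f x $ i * f x $ j \<partial>M)"
    by (simp add: transpose_def vec_eq_iff mult.commute)
  fix y :: "real^'n"
  have "y \<bullet> ((\<chi> i j. \<integral>x. f x $ i * f x $ j \<partial>M) *v y)
      = (\<Sum>i\<in>UNIV. \<Sum>j\<in>UNIV. \<integral>x. y$i * y$j * (f x $ i * f x $ j) \<partial>M)"
    by (simp add: inner_vec_def matrix_vector_mult_def sum_distrib_left mult_ac)
  also have "\<dots> = (\<integral>x. (y \<bullet> f x)^2 \<partial>M)"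
    using int by (simp add: Bochner_Integration.integral_sum inner_vec_def power2_eq_square sum_product mult_ac)
  also have "\<dots> \<ge> 0" by (rule integral_nonneg_AE) simp
  finally show "0 \<le> y \<bullet> ((\<chi> i j. \<integral>x. f x $ i * f x $ j \<partial>M) *v y)" .
qed

lemma second_moment_zero_imp_AE_zero:
  fixes f :: "'a \<Rightarrow> real^'n"
  assumes int: "\<And>i. integrable M (\<lambda>x. f x $ i * f x $ i)" and zero: "second_moment M f = 0"
  shows "AE x in M. f x = 0"
proof -
  have "AE x in M. \<forall>i\<in>UNIV. f x $ i = 0"
  proof (rule AE_finite_allI[OF finite])
    fix i
    have "(\<integral>x. f x $ i * f x $ i \<partial>M) = 0"
      using zero unfolding second_moment_def by (simp add: vec_eq_iff)
    then have "AE x in M. f x $ i * f x $ i = 0"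
      using integral_nonneg_eq_0_iff_AE[OF int[of i]] by simp
    then show "AE x in M. f x $ i = 0" by eventually_elim simp
  qed
  then show ?thesis by eventually_elim (simp add: vec_eq_iff)
qed

lemma second_moment_add_uncorrelated:
  fixes u e :: "'a \<Rightarrow> real^'n"
  assumes "\<And>i j. integrable M (\<lambda>x. u x $ i * u x $ j)" "\<And>i j. integrable M (\<lambda>x. e x $ i * e x $ j)"
    and "\<And>i j. integrable M (\<lambda>x. u x $ i * e x $ j)"
    and uncorrelated: "\<And>i j. (\<integral>x. u x $ i * e x $ j \<partial>M) = 0"
  shows "second_moment M (\<lambda>x. u x + e x) = second_moment M u + second_moment M e"
proof -
  have "(\<integral>x. (u x + e x) $ i * (u x + e x) $ j \<partial>M)
      = (\<integral>x. u x $ i * u x $ j + u x $ i * e x $ j + u x $ j * e x $ i + e x $ i * e x $ j \<partial>M)" for i j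
    by (simp add: algebra_simps)
  also have "\<dots> i j = (\<integral>x. u x $ i * u x $ j \<partial>M) + (\<integral>x. e x $ i * e x $ j \<partial>M)" for i j
    using assms by simp
  finally show ?thesis unfolding second_moment_def by (simp add: vec_eq_iff)
qed

lemma borel_measurable_vec_nth [measurable (raw)]:
  fixes f :: "'a \<Rightarrow> real^'n"
  assumes "f \<in> borel_measurable M"
  shows "(\<lambda>x. f x $ i) \<in> borel_measurable M"
proof -
  have "(\<lambda>v::real^'n. v $ i) \<in> borel_measurable borel"
    by (intro borel_measurable_continuous_onI continuous_on_component continuous_on_id)
  from measurable_compose[OF assms this] show ?thesis by (simp add: comp_def)
qed

lemma (in prob_space) indep_var_of_product_distr:
  fixes X :: "'a \<Rightarrow> 'b::second_countable_topology" and E :: "'a \<Rightarrow> 'c::second_countable_topology"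
    and g :: "'b \<Rightarrow> real" and k :: "'c \<Rightarrow> real"
  assumes Xm [measurable]: "X \<in> borel_measurable M" and Em [measurable]: "E \<in> borel_measurable M"
    and prod: "distr M borel (\<lambda>x. (X x, E x)) = distr M borel X \<Otimes>\<^sub>M distr M borel E"
    and gm [measurable]: "g \<in> borel_measurable borel" and km [measurable]: "k \<in> borel_measurable borel"
  shows "indep_var borel (\<lambda>x. g (X x)) borel (\<lambda>x. k (E x))"
proof -
  have d1: "distr M borel (\<lambda>x. g (X x)) = distr (distr M borel X) borel g"
    using distr_distr[OF gm Xm] by (simp add: comp_def)
  have d2: "distr M borel (\<lambda>x. k (E x)) = distr (distr M borel E) borel k"
    using distr_distr[OF km Em] by (simp add: comp_def)
  have sf: "sigma_finite_measure (distr (distr M borel E) borel k)"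
    by (intro prob_space_imp_sigma_finite prob_space.prob_space_distr[OF prob_space_distr[OF Em]]) simp
  have pm: "(\<lambda>x. (X x, E x)) \<in> borel_measurable M"
    unfolding borel_prod[symmetric] by (rule measurable_Pair[OF Xm Em])
  have mm: "(\<lambda>(x, y). (g x, k y)) \<in> measurable (borel :: ('b \<times> 'c) measure) (borel \<Otimes>\<^sub>M borel)"
    unfolding borel_prod[symmetric] by measurable
  have "distr M borel (\<lambda>x. g (X x)) \<Otimes>\<^sub>M distr M borel (\<lambda>x. k (E x))
      = distr (distr M borel X \<Otimes>\<^sub>M distr M borel E) (borel \<Otimes>\<^sub>M borel) (\<lambda>(x, y). (g x, k y))"
    unfolding d1 d2 by (rule pair_measure_distr[OF _ _ sf]) simp_all
  also have "\<dots> = distr M (borel \<Otimes>\<^sub>M borel) (\<lambda>x. (g (X x), k (E x)))"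
    unfolding prod[symmetric] using distr_distr[OF mm pm] by (simp add: comp_def)
  finally show ?thesis unfolding indep_var_distribution_eq by simp
qed

section \<open>Multilayer perceptrons\<close>

text \<open>A sigmoidal function is bounded (by its limits at \<open>\<plusminus>\<infinity>\<close>, being monotone).\<close>
lemma sigmoidal_bounded:
  assumes "sigmoidal \<sigma>"
  obtains K where "\<And>x. \<bar>\<sigma> x\<bar> \<le> K"
proof -
  from assms obtain a b where mono: "mono \<sigma>" and lim: "(\<sigma> \<longlongrightarrow> a) at_bot" "(\<sigma> \<longlongrightarrow> b) at_top"
    unfolding sigmoidal_def by auto
  have up: "\<sigma> x \<le> b" for x
  proof (rule ccontr)
    assume "\<not> \<sigma> x \<le> b"
    then have "eventually (\<lambda>y. \<sigma> y < \<sigma> x) at_top" using order_tendstoD(2)[OF lim(2)] by simp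
    then obtain N where N: "\<And>y. y \<ge> N \<Longrightarrow> \<sigma> y < \<sigma> x" unfolding eventually_at_top_linorder by auto
    have "\<sigma> x \<le> \<sigma> (max x N)" using mono by (simp add: mono_def)
    with N[of "max x N"] show False by simp
  qed
  have lo: "a \<le> \<sigma> x" for x
  proof (rule ccontr)
    assume "\<not> a \<le> \<sigma> x"
    then have "eventually (\<lambda>y. \<sigma> x < \<sigma> y) at_bot" using order_tendstoD(1)[OF lim(1)] by simp
    then obtain N where N: "\<And>y. y \<le> N \<Longrightarrow> \<sigma> x < \<sigma> y" unfolding eventually_at_bot_linorder by auto
    have "\<sigma> (min x N) \<le> \<sigma> x" using mono by (simp add: mono_def)
    with N[of "min x N"] show False by simp
  qed
  show ?thesis by (rule that[of "\<bar>a\<bar> + \<bar>b\<bar>"]) (use up lo in \<open>smt (verit)\<close>)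
qed

lemma mlp_continuous:
  assumes "sigmoidal \<sigma>"
  shows "continuous_on UNIV (mlp \<sigma> V)"
proof -
  obtain A c B b where V: "V = (A, c, B, b)" by (cases V) auto
  have s: "continuous_on UNIV \<sigma>" using assms unfolding sigmoidal_def by auto
  have "continuous_on UNIV (\<lambda>z. (\<chi> h. \<sigma> ((A $ h) \<bullet> z + c $ h)))"
    by (intro continuous_on_vec_lambda continuous_on_compose2[OF s _ subset_UNIV] continuous_intros)
  moreover have L: "continuous_on UNIV ((*v) B)"
    by (rule linear_continuous_on[OF matrix_vector_mul_bounded_linear])
  ultimately have "continuous_on UNIV (\<lambda>z. B *v (\<chi> h. \<sigma> ((A $ h) \<bullet> z + c $ h)) + b)"
    by (intro continuous_on_add continuous_on_const continuous_on_compose2[OF L]) auto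
  then show ?thesis unfolding V mlp_def by simp
qed

lemma mlp_measurable: "sigmoidal \<sigma> \<Longrightarrow> mlp \<sigma> V \<in> borel_measurable borel"
  by (rule borel_measurable_continuous_onI[OF mlp_continuous])

text \<open>Bounded activations make the network output bounded: the hidden layer lies in a cube,
  and the output layer is affine.\<close>
lemma mlp_bounded:
  fixes V :: "(real^'p^'h) \<times> (real^'h) \<times> (real^'h^'d) \<times> (real^'d)"
  assumes "sigmoidal \<sigma>"
  shows "bounded (range (mlp \<sigma> V))"
proof -
  obtain K where K: "\<And>x. \<bar>\<sigma> x\<bar> \<le> K" using sigmoidal_bounded[OF assms] by blast
  obtain A c B b where V: "V = (A, c, B, b)" by (cases V) auto
  define hidden where "hidden z = (\<chi> h. \<sigma> ((A $ h) \<bullet> z + c $ h))" for z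
  have "norm (hidden z) \<le> real CARD('h) * K" for z
  proof -
    have "norm (hidden z) \<le> (\<Sum>h\<in>UNIV. \<bar>hidden z $ h\<bar>)" by (rule norm_le_l1_cart)
    also have "\<dots> \<le> (\<Sum>h\<in>(UNIV::'h set). K)" unfolding hidden_def by (intro sum_mono) (simp add: K)
    finally show ?thesis by simp
  qed
  then have "bounded (range hidden)" unfolding bounded_iff by blast
  then have "bounded ((\<lambda>v. b + v) ` ((\<lambda>v. B *v v) ` range hidden))"
    by (intro bounded_translation bounded_linear_image[OF _ matrix_vector_mul_bounded_linear])
  moreover have "range (mlp \<sigma> V) \<subseteq> (\<lambda>v. b + v) ` ((\<lambda>v. B *v v) ` range hidden)"
    by (auto simp: V mlp_def hidden_def add.commute)
  ultimately show ?thesis by (rule bounded_subset)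
qed

section \<open>Consistency of the log-determinant contrast\<close>

lemma emp_cov_entry:
  "emp_cov f Y Z n x $ i $ j = (\<Sum>t\<in>{1..n}. (Y t x - f (Z t x)) $ i * (Y t x - f (Z t x)) $ j) / real n"
  by (simp add: emp_cov_def outer_def sum_component divide_inverse mult.commute)

locale iid_regression = prob_space +
  fixes Z :: "nat \<Rightarrow> 'a \<Rightarrow> real^'p" and eps :: "nat \<Rightarrow> 'a \<Rightarrow> real^'d"
    and Y :: "nat \<Rightarrow> 'a \<Rightarrow> real^'d" and f0 :: "real^'p \<Rightarrow> real^'d"
  assumes indep_pairs: "indep_vars (\<lambda>_. borel) (\<lambda>t x. (Z t x, eps t x)) UNIV"
    and ident_pairs: "\<And>t. distr M borel (\<lambda>x. (Z t x, eps t x)) = distr M borel (\<lambda>x. (Z 0 x, eps 0 x))"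
    and input_noise_product:
      "distr M borel (\<lambda>x. (Z 0 x, eps 0 x)) = distr M borel (Z 0) \<Otimes>\<^sub>M distr M borel (eps 0)"
    and noise_centred: "\<And>i. expectation (\<lambda>x. eps 0 x $ i) = 0"
    and noise_square_integrable: "integrable M (\<lambda>x. (norm (eps 0 x))^2)"
    and model: "\<And>t x. x \<in> space M \<Longrightarrow> Y t x = f0 (Z t x) + eps t x"
    and f0_measurable [measurable]: "f0 \<in> borel_measurable borel"
begin

lemma pair_measurable [measurable]: "(\<lambda>x. (Z t x, eps t x)) \<in> borel_measurable M"
  using indep_pairs unfolding indep_vars_def by simp

lemma input_measurable [measurable]: "Z t \<in> borel_measurable M"
  and noise_measurable [measurable]: "eps t \<in> borel_measurable M"
proof -
  have "fst \<in> borel_measurable (borel :: ((real^'p) \<times> (real^'d)) measure)"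
    and "snd \<in> borel_measurable (borel :: ((real^'p) \<times> (real^'d)) measure)"
    by (intro borel_measurable_continuous_onI continuous_intros)+
  from this[THEN measurable_compose[OF pair_measurable]]
  show "Z t \<in> borel_measurable M" "eps t \<in> borel_measurable M" by (simp_all add: comp_def)
qed

lemma noise_product_integrable: "integrable M (\<lambda>x. eps 0 x $ i * eps 0 x $ j)"
proof (rule Bochner_Integration.integrable_bound[OF noise_square_integrable])
  show "AE x in M. norm (eps 0 x $ i * eps 0 x $ j) \<le> norm ((norm (eps 0 x))^2)"
  proof (rule AE_I2)
    fix x
    have "\<bar>eps 0 x $ i\<bar> * \<bar>eps 0 x $ j\<bar> \<le> norm (eps 0 x) * norm (eps 0 x)"
      by (intro mult_mono component_le_norm_cart) auto
    then show "norm (eps 0 x $ i * eps 0 x $ j) \<le> norm ((norm (eps 0 x))^2)"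
      by (simp add: abs_mult power2_eq_square)
  qed
qed simp

lemma noise_integrable: "integrable M (\<lambda>x. eps 0 x $ i)"
proof (rule Bochner_Integration.integrable_bound[where f="\<lambda>x. 1 + (norm (eps 0 x))^2"])
  show "integrable M (\<lambda>x. 1 + (norm (eps 0 x))^2)" using noise_square_integrable by simp
  show "AE x in M. norm (eps 0 x $ i) \<le> norm (1 + (norm (eps 0 x))^2)"
  proof (rule AE_I2)
    fix x
    have "2 * norm (eps 0 x) \<le> 1 + (norm (eps 0 x))^2"
      using zero_le_square[of "norm (eps 0 x) - 1"] by (simp add: power2_eq_square algebra_simps)
    then have "norm (eps 0 x) \<le> 1 + (norm (eps 0 x))^2" using norm_ge_zero[of "eps 0 x"] by linarith
    then show "norm (eps 0 x $ i) \<le> norm (1 + (norm (eps 0 x))^2)"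
      using component_le_norm_cart[of "eps 0 x" i] by simp
  qed
qed simp

text \<open>For a candidate regression function \<open>f\<close> at bounded distance from \<open>f\<^sub>0\<close>, the
  discrepancy \<open>f\<^sub>0(Z) - f(Z)\<close> is bounded and independent of the noise, so all products
  of its components with themselves and with noise components are integrable.\<close>
lemma discrepancy_moments:
  assumes [measurable]: "f \<in> borel_measurable borel" and C: "\<And>z. norm (f0 z - f z) \<le> C"
  defines "u \<equiv> \<lambda>x. f0 (Z 0 x) - f (Z 0 x)"
  shows "integrable M (\<lambda>x. u x $ i * u x $ j)"
    and "indep_var borel (\<lambda>x. u x $ i) borel (\<lambda>x. eps 0 x $ j)"
    and "integrable M (\<lambda>x. u x $ i * eps 0 x $ j)"
    and "(\<integral>x. u x $ i * eps 0 x $ j \<partial>M) = 0"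
proof -
  have bound: "\<bar>u x $ k\<bar> \<le> C" for x k
    unfolding u_def using component_le_norm_cart C order_trans by blast
  have int_u: "integrable M (\<lambda>x. u x $ k)" for k
    by (rule integrable_const_bound[where B=C]) (use bound in \<open>auto simp: u_def\<close>)
  show "integrable M (\<lambda>x. u x $ i * u x $ j)"
    by (rule integrable_const_bound[where B="C * C"]) (use bound in \<open>auto simp: u_def abs_mult intro!: mult_mono'\<close>)
  show indep: "indep_var borel (\<lambda>x. u x $ i) borel (\<lambda>x. eps 0 x $ j)"
    using indep_var_of_product_distr[OF input_measurable noise_measurable input_noise_product,
        of "\<lambda>z. (f0 z - f z) $ i" "\<lambda>e. e $ j"]
    unfolding u_def by simp
  show "integrable M (\<lambda>x. u x $ i * eps 0 x $ j)"
    by (rule indep_var_integrable[OF indep int_u noise_integrable])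
  show "(\<integral>x. u x $ i * eps 0 x $ j \<partial>M) = 0"
    using indep_var_lebesgue_integral[OF indep int_u noise_integrable] noise_centred by simp
qed

lemma residual_product_integrable:
  assumes "f \<in> borel_measurable borel" and "\<And>z. norm (f0 z - f z) \<le> C"
  shows "integrable M (\<lambda>x. (Y 0 x - f (Z 0 x)) $ i * (Y 0 x - f (Z 0 x)) $ j)"
proof -
  note d = discrepancy_moments[OF assms]
  let ?u = "\<lambda>x. f0 (Z 0 x) - f (Z 0 x)"
  have "integrable M (\<lambda>x. ?u x $ i * ?u x $ j + ?u x $ i * eps 0 x $ j + ?u x $ j * eps 0 x $ i
                          + eps 0 x $ i * eps 0 x $ j)"
    using d(1,3) noise_product_integrable by simp
  moreover have "(Y 0 x - f (Z 0 x)) $ i * (Y 0 x - f (Z 0 x)) $ j = ?u x $ i * ?u x $ j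
      + ?u x $ i * eps 0 x $ j + ?u x $ j * eps 0 x $ i + eps 0 x $ i * eps 0 x $ j" if "x \<in> space M" for x
    using that by (simp only: model) (simp add: algebra_simps)
  ultimately show ?thesis
    by (subst Bochner_Integration.integrable_cong[OF refl]) auto
qed

text \<open>Population covariance of the residual of \<open>f\<close>: the second moment of the discrepancy plus
  the noise covariance, the cross terms vanishing by independence.\<close>
lemma pop_cov_decomposition:
  assumes "f \<in> borel_measurable borel" and "\<And>z. norm (f0 z - f z) \<le> C"
  shows "pop_cov M f (Y 0) (Z 0)
           = second_moment M (\<lambda>x. f0 (Z 0 x) - f (Z 0 x)) + second_moment M (eps 0)"
proof -
  note d = discrepancy_moments[OF assms]
  have "pop_cov M f (Y 0) (Z 0) = second_moment M (\<lambda>x. (f0 (Z 0 x) - f (Z 0 x)) + eps 0 x)"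
    unfolding pop_cov_second_moment by (rule second_moment_cong) (simp add: model)
  also have "\<dots> = second_moment M (\<lambda>x. f0 (Z 0 x) - f (Z 0 x)) + second_moment M (eps 0)"
    by (rule second_moment_add_uncorrelated[OF d(1) noise_product_integrable d(3,4)])
  finally show ?thesis .
qed

text \<open>Entrywise strong law for the empirical covariance: each entry of \<open>\<Gamma>\<^sub>n\<close> is an average
  of i.i.d. integrable functions of the pairs \<open>(Z\<^sub>t, \<epsilon>\<^sub>t)\<close>.\<close>
lemma emp_cov_converges:
  assumes [measurable]: "f \<in> borel_measurable borel" and C: "\<And>z. norm (f0 z - f z) \<le> C"
  shows "AE x in M. \<forall>i j. (\<lambda>n. emp_cov f Y Z n x $ i $ j) \<longlonglongrightarrow> pop_cov M f (Y 0) (Z 0) $ i $ j"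
proof -
  have entry: "AE x in M. (\<lambda>n. emp_cov f Y Z n x $ i $ j) \<longlonglongrightarrow> pop_cov M f (Y 0) (Z 0) $ i $ j" for i j
  proof -
    define h where "h p = (f0 (fst p) - f (fst p) + snd p) $ i * (f0 (fst p) - f (fst p) + snd p) $ j"
      for p :: "(real^'p) \<times> (real^'d)"
    have h_meas [measurable]: "h \<in> borel_measurable borel"
      unfolding h_def borel_prod[symmetric] by measurable
    have residual: "(Y t x - f (Z t x)) $ i * (Y t x - f (Z t x)) $ j = h (Z t x, eps t x)"
      if "x \<in> space M" for t x
      using that unfolding h_def by (simp only: model) (simp add: algebra_simps)
    have ind: "indep_vars (\<lambda>_. borel) (\<lambda>t x. h (Z t x, eps t x)) UNIV"
      by (rule indep_vars_compose2[OF indep_pairs, where Y="\<lambda>_. h"]) (rule h_meas)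
    have ident: "distr M borel (\<lambda>x. h (Z t x, eps t x)) = distr M borel (\<lambda>x. h (Z 0 x, eps 0 x))" for t
      by (rule distr_compose_same_distr[OF pair_measurable pair_measurable ident_pairs h_meas])
    have int: "integrable M (\<lambda>x. h (Z 0 x, eps 0 x))"
    proof (rule integrable_cong_AE_imp[OF residual_product_integrable[OF assms, of i j]])
      show "AE x in M. (Y 0 x - f (Z 0 x)) $ i * (Y 0 x - f (Z 0 x)) $ j = h (Z 0 x, eps 0 x)"
        by (intro AE_I2 residual)
    qed measurable
    have pop: "pop_cov M f (Y 0) (Z 0) $ i $ j = expectation (\<lambda>x. h (Z 0 x, eps 0 x))"
      unfolding pop_cov_def vec_lambda_beta by (rule Bochner_Integration.integral_cong[OF refl residual])
    have emp: "emp_cov f Y Z n x $ i $ j = (\<Sum>t\<in>{1..n}. h (Z t x, eps t x)) / real n"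
      if "x \<in> space M" for n x
      using that unfolding emp_cov_entry by (simp only: residual)
    from slln[OF ind ident int] show ?thesis
      by (rule AE_mp[OF _ AE_I2]) (simp add: emp pop)
  qed
  have "AE x in M. \<forall>i\<in>UNIV. \<forall>j\<in>UNIV. (\<lambda>n. emp_cov f Y Z n x $ i $ j) \<longlonglongrightarrow> pop_cov M f (Y 0) (Z 0) $ i $ j"
    by (intro AE_finite_allI finite entry)
  then show ?thesis by simp
qed

lemma det_pop_cov_ge_noise:
  assumes noise_inv: "invertible (second_moment M (eps 0))"
    and f: "f \<in> borel_measurable borel" and C: "\<And>z. norm (f0 z - f z) \<le> C"
  shows "0 < det (second_moment M (eps 0))"
    and "det (second_moment M (eps 0)) \<le> det (pop_cov M f (Y 0) (Z 0))"
    and "det (pop_cov M f (Y 0) (Z 0)) = det (second_moment M (eps 0)) \<Longrightarrow>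
           AE x in M. f (Z 0 x) = f0 (Z 0 x)"
proof -
  let ?\<Sigma> = "second_moment M (eps 0)" and ?D = "second_moment M (\<lambda>x. f0 (Z 0 x) - f (Z 0 x))"
  have pd: "pd_matrix ?\<Sigma>"
    by (rule psd_invertible_imp_pd[OF second_moment_psd[OF noise_product_integrable] noise_inv])
  have psd: "psd_matrix ?D" by (rule second_moment_psd[OF discrepancy_moments(1)[OF f C]])
  have cov: "pop_cov M f (Y 0) (Z 0) = ?\<Sigma> + ?D"
    using pop_cov_decomposition[OF f C] by (simp add: add.commute)
  show "0 < det ?\<Sigma>" by (rule pd_det_pos[OF pd])
  show "det ?\<Sigma> \<le> det (pop_cov M f (Y 0) (Z 0))" unfolding cov by (rule det_mono_psd(1)[OF psd pd])
  assume "det (pop_cov M f (Y 0) (Z 0)) = det ?\<Sigma>"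
  then have "?D = 0" unfolding cov by (rule det_mono_psd(2)[OF psd pd])
  then have "AE x in M. f0 (Z 0 x) - f (Z 0 x) = 0"
    by (rule second_moment_zero_imp_AE_zero[OF discrepancy_moments(1)[OF f C]])
  then show "AE x in M. f (Z 0 x) = f0 (Z 0 x)" by eventually_elim simp
qed

lemma U_n_converges:
  assumes noise_inv: "invertible (second_moment M (eps 0))"
    and f: "f \<in> borel_measurable borel" and C: "\<And>z. norm (f0 z - f z) \<le> C"
  shows "AE x in M. (\<lambda>n. U_n f Y Z n x) \<longlonglongrightarrow> ln (det (pop_cov M f (Y 0) (Z 0)))"
  using emp_cov_converges[OF f C]
proof eventually_elim
  case (elim x)
  have "(\<lambda>n. det (emp_cov f Y Z n x)) \<longlonglongrightarrow> det (pop_cov M f (Y 0) (Z 0))"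
    by (rule tendsto_det) (use elim in auto)
  moreover have "0 < det (pop_cov M f (Y 0) (Z 0))"
    using det_pop_cov_ge_noise(1,2)[OF assms] by linarith
  ultimately show ?case unfolding U_n_def by (intro tendsto_ln) auto
qed

theorem contrast_consistency:
  assumes noise_inv: "invertible (second_moment M (eps 0))"
    and f: "f \<in> borel_measurable borel" and C: "\<And>z. norm (f0 z - f z) \<le> C"
  shows "AE x in M. (\<lambda>n. U_n f Y Z n x - U_n f0 Y Z n x) \<longlonglongrightarrow> K_contrast M f f0 (Y 0) (Z 0)"
    and "K_contrast M f f0 (Y 0) (Z 0) \<ge> 0"
    and "K_contrast M f f0 (Y 0) (Z 0) = 0 \<longleftrightarrow> (AE x in M. f (Z 0 x) = f0 (Z 0 x))"
proof -
  have C0: "norm (f0 z - f0 z) \<le> 0" for z by simp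
  have cov0: "pop_cov M f0 (Y 0) (Z 0) = second_moment M (eps 0)"
    using pop_cov_decomposition[OF f0_measurable C0] by (simp add: second_moment_def vec_eq_iff)
  note det = det_pop_cov_ge_noise[OF noise_inv f C]
  have K: "K_contrast M f f0 (Y 0) (Z 0) = ln (det (pop_cov M f (Y 0) (Z 0))) - ln (det (second_moment M (eps 0)))"
    unfolding K_contrast_def cov0 ..
  show "AE x in M. (\<lambda>n. U_n f Y Z n x - U_n f0 Y Z n x) \<longlonglongrightarrow> K_contrast M f f0 (Y 0) (Z 0)"
    using U_n_converges[OF noise_inv f C] U_n_converges[OF noise_inv f0_measurable C0]
    unfolding K_contrast_def by eventually_elim (rule tendsto_diff)
  show "K_contrast M f f0 (Y 0) (Z 0) \<ge> 0" unfolding K using det(1,2) by simp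
  show "K_contrast M f f0 (Y 0) (Z 0) = 0 \<longleftrightarrow> (AE x in M. f (Z 0 x) = f0 (Z 0 x))"
  proof
    assume "K_contrast M f f0 (Y 0) (Z 0) = 0"
    then have "det (pop_cov M f (Y 0) (Z 0)) = det (second_moment M (eps 0))"
      unfolding K using det(1,2) by simp
    then show "AE x in M. f (Z 0 x) = f0 (Z 0 x)" by (rule det(3))
  next
    assume "AE x in M. f (Z 0 x) = f0 (Z 0 x)"
    then have "second_moment M (\<lambda>x. f0 (Z 0 x) - f (Z 0 x)) = 0"
      unfolding second_moment_def using f
      by (intro vec_eq_iff[THEN iffD2] allI) (auto intro!: integral_eq_zero_AE elim: AE_mp)
    then have "pop_cov M f (Y 0) (Z 0) = pop_cov M f0 (Y 0) (Z 0)"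
      unfolding cov0 pop_cov_decomposition[OF f C] by simp
    then show "K_contrast M f f0 (Y 0) (Z 0) = 0" unfolding K_contrast_def by simp
  qed
qed

end

text \<open>The network
  outputs are bounded and measurable, so the general consistency theorem applies; equality
  almost surely on the inputs is turned into equality of weights by identifiability.\<close>
theorem mainTheorem1:
  fixes M :: "'a measure" and \<sigma> :: "real \<Rightarrow> real"
    and Z :: "nat \<Rightarrow> 'a \<Rightarrow> real^'p" and eps :: "nat \<Rightarrow> 'a \<Rightarrow> real^'d"
    and Y :: "nat \<Rightarrow> 'a \<Rightarrow> real^'d"
    and \<Theta> :: "((real^'p^'h) \<times> (real^'h) \<times> (real^'h^'d) \<times> (real^'d)) set"
    and W0 W :: "(real^'p^'h) \<times> (real^'h) \<times> (real^'h^'d) \<times> (real^'d)"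
    and G :: "(((real^'p^'h) \<times> (real^'h) \<times> (real^'h^'d) \<times> (real^'d)) \<Rightarrow>
               ((real^'p^'h) \<times> (real^'h) \<times> (real^'h^'d) \<times> (real^'d))) set"
  assumes "prob_space M"
    and "sigmoidal \<sigma>"
    and "prob_space.indep_vars M (\<lambda>_. borel) (\<lambda>t x. (Z t x, eps t x)) UNIV"
    and "\<forall>t. distr M borel (\<lambda>x. (Z t x, eps t x)) = distr M borel (\<lambda>x. (Z 0 x, eps 0 x))"
    and "distr M borel (\<lambda>x. (Z 0 x, eps 0 x)) = distr M borel (Z 0) \<Otimes>\<^sub>M distr M borel (eps 0)"
    and "\<forall>i. prob_space.expectation M (\<lambda>x. eps 0 x $ i) = 0"
    and "integrable M (\<lambda>x. (norm (eps 0 x))\<^sup>2)"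
    and "invertible (\<chi> i j. prob_space.expectation M (\<lambda>x. eps 0 x $ i * eps 0 x $ j))"
    and "\<forall>t. \<forall>x\<in>space M. Y t x = mlp \<sigma> W0 (Z t x) + eps t x"
    and "compact \<Theta>" and "W0 \<in> \<Theta>"
    and "finite G" and "id \<in> G" and "\<forall>g\<in>G. \<forall>h\<in>G. g \<circ> h \<in> G" and "\<forall>g\<in>G. bij g"
    and "\<forall>g\<in>G. \<forall>V z. mlp \<sigma> (g V) z = mlp \<sigma> V z"
    and "\<forall>V\<in>\<Theta>. (AE x in M. mlp \<sigma> V (Z 0 x) = mlp \<sigma> W0 (Z 0 x)) \<longrightarrow> (\<exists>g\<in>G. V = g W0)"
    and "W \<in> \<Theta>"
  shows "(AE x in M. (\<lambda>n. U_n (mlp \<sigma> W) Y Z n x - U_n (mlp \<sigma> W0) Y Z n x)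
            \<longlonglongrightarrow> K_contrast M (mlp \<sigma> W) (mlp \<sigma> W0) (Y 0) (Z 0))
         \<and> K_contrast M (mlp \<sigma> W) (mlp \<sigma> W0) (Y 0) (Z 0) \<ge> 0
         \<and> (K_contrast M (mlp \<sigma> W) (mlp \<sigma> W0) (Y 0) (Z 0) = 0 \<longleftrightarrow> (\<exists>g\<in>G. W = g W0))"
proof -
  interpret prob_space M by (rule assms(1))
  interpret iid_regression M Z eps Y "mlp \<sigma> W0"
  proof
    show "Y t x = mlp \<sigma> W0 (Z t x) + eps t x" if "x \<in> space M" for t x
      using assms(9) that by blast
  qed (use assms(3-7) mlp_measurable[OF assms(2)] in simp_all)
  have noise_inv: "invertible (second_moment M (eps 0))"
    using assms(8) unfolding second_moment_def .
  obtain C where C: "\<And>z. norm (mlp \<sigma> W0 z - mlp \<sigma> W z) \<le> C"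
    using bounded_minus_comp[OF mlp_bounded mlp_bounded, OF assms(2,2), of W0 W]
    unfolding bounded_iff by auto
  note K = contrast_consistency[OF noise_inv mlp_measurable[OF assms(2)] C]
  have "K_contrast M (mlp \<sigma> W) (mlp \<sigma> W0) (Y 0) (Z 0) = 0 \<longleftrightarrow> (\<exists>g\<in>G. W = g W0)"
  proof
    assume "K_contrast M (mlp \<sigma> W) (mlp \<sigma> W0) (Y 0) (Z 0) = 0"
    then have "AE x in M. mlp \<sigma> W (Z 0 x) = mlp \<sigma> W0 (Z 0 x)" using K(3) by simp
    then show "\<exists>g\<in>G. W = g W0" using assms(17,18) by blast
  next
    assume "\<exists>g\<in>G. W = g W0"
    then obtain g where g: "g \<in> G" and W: "W = g W0" by blast
    have "mlp \<sigma> W = mlp \<sigma> W0"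
      unfolding W using bspec[OF assms(16) g] by blast
    then show "K_contrast M (mlp \<sigma> W) (mlp \<sigma> W0) (Y 0) (Z 0) = 0" using K(3) by simp
  qed
  with K(1,2) show ?thesis by blast
qed

end
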